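(* Let $(s_n)_{n\ge1}$ be a sequence of integers with $s_n\ge4$ for all $n$ and $s_n\to\infty$. Put \[ s_0=\liminf_{n\to\infty}\frac{\log(s_1\cdots s_n)}{2\log(s_1\cdots s_n)+\log s_{n+1}}. \] Then for every integer $N\ge2$, \[ \dim_H\{x\in(0,1]:\ \forall n\in\mathbb N,\ s_n\le a_n(x)\le Ns_n-1\}=s_0. \]
   Context: Lüroth digits: for $x\in(0,1]$, $a_1(x)=[1/x]+1$, $\mathcal L(x)=[1/x]([1/x]+1)x-[1/x]$ ($[t]$ = integer part), $a_{n+1}(x)=a_1(\mathcal L^n(x))$, so that $x=\frac1{a_1}+\sum_{n\ge2}\frac{1}{a_1(a_1-1)\cdots a_{n-1}(a_{n-1}-1)a_n}$. *)

theory Defs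
  imports "HOL-Analysis.Analysis"
begin

definition hausdorff_pre :: "real \<Rightarrow> real \<Rightarrow> 'a::metric_space set \<Rightarrow> ennreal" where
  "hausdorff_pre s \<delta> E =
     (INF U \<in> {U :: nat \<Rightarrow> 'a set. E \<subseteq> (\<Union>i. U i) \<and> (\<forall>i. bounded (U i) \<and> diameter (U i) \<le> \<delta>)}.
        (\<Sum>i. ennreal (diameter (U i) powr s)))"

definition hausdorff_measure :: "real \<Rightarrow> 'a::metric_space set \<Rightarrow> ennreal" where
  "hausdorff_measure s E = (SUP \<delta> \<in> {0<..}. hausdorff_pre s \<delta> E)"

definition hausdorff_dim :: "'a::metric_space set \<Rightarrow> real" where
  "hausdorff_dim E = Inf {s. 0 \<le> s \<and> hausdorff_measure s E = 0}"

definition luroth_a1 :: "real \<Rightarrow> int" where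
  "luroth_a1 x = \<lfloor>1 / x\<rfloor> + 1"

definition luroth_map :: "real \<Rightarrow> real" where
  "luroth_map x = of_int \<lfloor>1 / x\<rfloor> * (of_int \<lfloor>1 / x\<rfloor> + 1) * x - of_int \<lfloor>1 / x\<rfloor>"

definition luroth_digit :: "nat \<Rightarrow> real \<Rightarrow> int" where
  "luroth_digit n x = luroth_a1 ((luroth_map ^^ (n - 1)) x)"

end

theory Submission
  imports Defs
begin

text \<open>
  Let \<open>P_n = s_1 \<cdots> s_n\<close>. The points of \<open>E\<close> with a prescribed admissible \<open>n\<close>-digit prefix
  form a Lueroth cylinder, an interval of length between \<open>1 / (N^(2n) P_n^2)\<close> and
  \<open>2^n / P_n^2\<close>, and there are \<open>(N - 1)^n P_n\<close> admissible prefixes.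

  Upper bound: a point of \<open>E\<close> lies in the initial \<open>1/(s_(n+1) - 1)\<close>-part of its \<open>n\<close>-cylinder,
  so \<open>E\<close> is covered by \<open>(N - 1)^n P_n\<close> intervals of length at most \<open>2^(n+1) / (P_n^2 s_(n+1))\<close>.
  Along the levels \<open>n\<close> where \<open>log P_n / (2 log P_n + log s_(n+1))\<close> is below \<open>t' < t\<close>, the
  \<open>t\<close>-dimensional cost of these covers tends to \<open>0\<close>; the factors exponential in \<open>n\<close> do not
  matter because \<open>log P_n\<close> grows superlinearly, as \<open>s_n \<longrightarrow> \<infinity>\<close>.

  Lower bound: give every admissible \<open>n\<close>-word the same mass. The points of \<open>E\<close> in a ball of
  radius \<open>\<rho>\<close> share their first \<open>k\<close> digits up to the level \<open>k + 1\<close> where they split. As all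
  digits are at least 4, the subcylinders with next digits \<open>A < B\<close> are separated by a gap
  comparable to \<open>|I_w| (B - A) / (A B)\<close>, so the ball meets few of them, and when the ratio above
  eventually exceeds \<open>t\<close> its mass is \<open>O(\<rho>^t)\<close>; the mass distribution principle concludes.
\<close>

section \<open>Lueroth cylinders\<close>

text \<open>The Lueroth cylinder of an admissible digit word \<open>w\<close> is the interval
  \<open>(cyl_start w, cyl_start w + cyl_len w]\<close>.\<close>

fun cyl_start :: "int list \<Rightarrow> real" where
  "cyl_start [] = 0"
| "cyl_start (a # w) = 1 / of_int a + cyl_start w / (of_int a * (of_int a - 1))"

fun cyl_len :: "int list \<Rightarrow> real" where
  "cyl_len [] = 1"
| "cyl_len (a # w) = cyl_len w / (of_int a * (of_int a - 1))"

definition admissible :: "int list \<Rightarrow> bool" where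
  "admissible w \<longleftrightarrow> (\<forall>a\<in>set w. a \<ge> 2)"

lemma admissible_simps [simp]:
  "admissible []"
  "admissible (a # w) \<longleftrightarrow> a \<ge> 2 \<and> admissible w"
  "admissible (u @ v) \<longleftrightarrow> admissible u \<and> admissible v"
  by (auto simp: admissible_def)

lemma cyl_bounds:
  assumes "admissible w"
  shows "0 \<le> cyl_start w" "0 < cyl_len w" "cyl_start w + cyl_len w \<le> 1"
proof -
  have "0 \<le> cyl_start w \<and> 0 < cyl_len w \<and> cyl_start w + cyl_len w \<le> 1"
    using assms
  proof (induction w)
    case (Cons a w)
    then have a: "real_of_int a \<ge> 2" and IH: "0 \<le> cyl_start w" "0 < cyl_len w" "cyl_start w + cyl_len w \<le> 1"
      by auto
    define d where "d = real_of_int a * (real_of_int a - 1)"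
    have d: "d > 0" using a by (simp add: d_def)
    have "cyl_start w / d + cyl_len w / d \<le> 1 / d"
      using IH d by (simp add: add_divide_distrib[symmetric] divide_right_mono)
    moreover have "1 / real_of_int a + 1 / d \<le> 1"
      using a by (simp add: d_def field_simps)
    ultimately show ?case using IH d a by (auto simp: d_def[symmetric] intro!: divide_nonneg_pos)
  qed simp
  then show "0 \<le> cyl_start w" "0 < cyl_len w" "cyl_start w + cyl_len w \<le> 1" by auto
qed

lemma cyl_start_append: "cyl_start (u @ v) = cyl_start u + cyl_len u * cyl_start v"
  by (induction u) (simp_all add: add_divide_distrib)

lemma cyl_len_append: "cyl_len (u @ v) = cyl_len u * cyl_len v"
  by (induction u) (simp_all add: field_simps)

lemma cyl_len_eq_prod:
  "cyl_len w = (\<Prod>i<length w. 1 / (real_of_int (w ! i) * (real_of_int (w ! i) - 1)))"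
proof (induction w)
  case (Cons a w)
  show ?case unfolding length_Cons prod.lessThan_Suc_shift using Cons by simp
qed simp

lemma cyl_end_snoc:
  assumes "a \<ge> 2"
  shows "cyl_start (w @ [a]) + cyl_len (w @ [a]) = cyl_start w + cyl_len w / (real_of_int a - 1)"
proof -
  have "1 / real_of_int a + 1 / (real_of_int a * (real_of_int a - 1)) = 1 / (real_of_int a - 1)"
    using assms by (simp add: field_simps)
  moreover have "cyl_start (w @ [a]) + cyl_len (w @ [a])
      = cyl_start w + cyl_len w * (1 / real_of_int a + 1 / (real_of_int a * (real_of_int a - 1)))"
    by (simp add: cyl_start_append cyl_len_append distrib_left)
  ultimately show ?thesis by simp
qed

lemma subcylinder_interior:
  assumes "admissible w" "a \<ge> 3"
    and "cyl_start (w @ [a]) \<le> x" "x \<le> cyl_start (w @ [a]) + cyl_len (w @ [a])"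
  shows "cyl_start w < x" "x < cyl_start w + cyl_len w"
proof -
  have a: "real_of_int a \<ge> 3" using assms by simp
  have len: "cyl_len w > 0" using cyl_bounds[OF assms(1)] by simp
  have "cyl_len w * (1 / real_of_int a) > 0" using len a by simp
  then show "cyl_start w < x" using assms(3) by (simp add: cyl_start_append)
  have "cyl_len w / (real_of_int a - 1) < cyl_len w" using len a by (simp add: field_simps)
  then show "x < cyl_start w + cyl_len w" using assms(2,4) by (simp add: cyl_end_snoc)
qed

lemma luroth_a1_map_eq:
  assumes "a \<ge> 2" "1 / real_of_int a < x" "x \<le> 1 / (real_of_int a - 1)"
  shows "luroth_a1 x = a"
    and "luroth_map x = real_of_int a * (real_of_int a - 1) * (x - 1 / real_of_int a)"
proof -
  have a: "real_of_int a \<ge> 2" using assms by simp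
  have x: "x > 0" using assms(2) a by (smt (verit) divide_pos_pos)
  have "1 / x < real_of_int a" "real_of_int a - 1 \<le> 1 / x"
    using assms(2,3) x a by (simp_all add: field_simps)
  then have fl: "\<lfloor>1 / x\<rfloor> = a - 1" by (simp add: floor_eq_iff)
  show "luroth_a1 x = a" by (simp add: luroth_a1_def fl)
  show "luroth_map x = real_of_int a * (real_of_int a - 1) * (x - 1 / real_of_int a)"
    using a by (simp add: luroth_map_def fl field_simps)
qed

lemma luroth_step:
  assumes "0 < x" "x \<le> 1"
  shows "luroth_a1 x \<ge> 2" "0 < luroth_map x" "luroth_map x \<le> 1"
    and "x = 1 / of_int (luroth_a1 x)
           + luroth_map x / (of_int (luroth_a1 x) * (of_int (luroth_a1 x) - 1))"
proof -
  define q where "q = real_of_int \<lfloor>1 / x\<rfloor>"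
  have "\<lfloor>1 / x\<rfloor> \<ge> 1" using assms by simp
  then have q: "q \<ge> 1" by (simp add: q_def)
  have "q \<le> 1 / x" "1 / x < q + 1" unfolding q_def by linarith+
  then have h1: "q * x \<le> 1" and h2: "1 < (q + 1) * x" using assms by (simp_all add: field_simps)
  have A: "of_int (luroth_a1 x) = q + 1" by (simp add: luroth_a1_def q_def)
  have LM: "luroth_map x = q * ((q + 1) * x - 1)" by (simp add: luroth_map_def q_def algebra_simps)
  show "luroth_a1 x \<ge> 2" using q A by linarith
  show "0 < luroth_map x" unfolding LM using h2 q by simp
  have "(q + 1) * (q * x) \<le> (q + 1) * 1" using h1 q by (intro mult_left_mono) auto
  then show "luroth_map x \<le> 1" unfolding LM by (simp add: algebra_simps)
  have "luroth_map x = ((q + 1) * q) * (x - 1 / (q + 1))"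
    unfolding LM using q by (simp add: field_simps)
  then have "luroth_map x / ((q + 1) * q) = x - 1 / (q + 1)"
    using q by simp
  then show "x = 1 / of_int (luroth_a1 x) + luroth_map x / (of_int (luroth_a1 x) * (of_int (luroth_a1 x) - 1))"
    unfolding A by simp
qed

lemma luroth_digit_Suc_Suc: "luroth_digit (Suc (Suc i)) x = luroth_digit (Suc i) (luroth_map x)"
  by (simp only: luroth_digit_def diff_Suc_1 funpow_Suc_right comp_def)

lemma luroth_digit_Suc_0 [simp]: "luroth_digit (Suc 0) x = luroth_a1 x"
  by (simp add: luroth_digit_def)

definition digit_prefix :: "nat \<Rightarrow> real \<Rightarrow> int list" where
  "digit_prefix n x = map (\<lambda>i. luroth_digit (Suc i) x) [0..<n]"

lemma length_digit_prefix [simp]: "length (digit_prefix n x) = n"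
  by (simp add: digit_prefix_def)

lemma nth_digit_prefix [simp]: "i < n \<Longrightarrow> digit_prefix n x ! i = luroth_digit (Suc i) x"
  by (simp add: digit_prefix_def)

lemma digit_prefix_0 [simp]: "digit_prefix 0 x = []"
  by (simp add: digit_prefix_def)

lemma digit_prefix_Suc: "digit_prefix (Suc n) x = luroth_a1 x # digit_prefix n (luroth_map x)"
proof (rule nth_equalityI)
  fix i assume "i < length (digit_prefix (Suc n) x)"
  then show "digit_prefix (Suc n) x ! i = (luroth_a1 x # digit_prefix n (luroth_map x)) ! i"
    by (cases i) (simp_all add: luroth_digit_Suc_Suc)
qed simp

lemma digit_prefix_snoc: "digit_prefix (Suc n) x = digit_prefix n x @ [luroth_digit (Suc n) x]"
  by (simp add: digit_prefix_def)

lemma digit_prefix_of_cylinder: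
  assumes "admissible w" "cyl_start w < x" "x \<le> cyl_start w + cyl_len w"
  shows "digit_prefix (length w) x = w"
    and "(luroth_map ^^ length w) x = (x - cyl_start w) / cyl_len w"
proof -
  have "digit_prefix (length w) x = w \<and> (luroth_map ^^ length w) x = (x - cyl_start w) / cyl_len w"
    using assms
  proof (induction w arbitrary: x)
    case (Cons a w)
    have a: "a \<ge> 2" and w: "admissible w" using Cons.prems by auto
    note B = cyl_bounds[OF w]
    define d where "d = real_of_int a * (real_of_int a - 1)"
    have d: "d > 0" using a by (simp add: d_def)
    define y where "y = (x - 1 / real_of_int a) * d"
    have lo: "cyl_start w < y" and hi: "y \<le> cyl_start w + cyl_len w"
      using Cons.prems d by (simp_all add: y_def d_def[symmetric] field_simps)
    have "1 / real_of_int a < x" using lo B d by (smt (verit) y_def mult_nonpos_nonneg)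
    moreover have "x \<le> 1 / (real_of_int a - 1)"
    proof -
      have "x - 1 / real_of_int a \<le> 1 / d" using hi B d by (simp add: y_def field_simps)
      moreover have "1 / real_of_int a + 1 / d = 1 / (real_of_int a - 1)"
        using a by (simp add: d_def field_simps)
      ultimately show ?thesis by linarith
    qed
    ultimately have "luroth_a1 x = a" "luroth_map x = y"
      using luroth_a1_map_eq[OF a] by (auto simp: y_def d_def mult.commute)
    moreover note IH = Cons.IH[OF w lo hi]
    moreover have "(y - cyl_start w) / cyl_len w = (x - cyl_start (a # w)) / cyl_len (a # w)"
      using d B by (simp add: y_def d_def[symmetric] field_simps)
    ultimately show ?case by (simp add: digit_prefix_Suc funpow_Suc_right del: funpow.simps)
  qed simp
  then show "digit_prefix (length w) x = w"
    and "(luroth_map ^^ length w) x = (x - cyl_start w) / cyl_len w" by auto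
qed

lemma luroth_expansion:
  assumes "0 < x" "x \<le> 1"
  shows "admissible (digit_prefix n x)"
    and "0 < (luroth_map ^^ n) x" "(luroth_map ^^ n) x \<le> 1"
    and "x = cyl_start (digit_prefix n x) + cyl_len (digit_prefix n x) * (luroth_map ^^ n) x"
proof -
  have "admissible (digit_prefix n x) \<and> 0 < (luroth_map ^^ n) x \<and> (luroth_map ^^ n) x \<le> 1 \<and>
    x = cyl_start (digit_prefix n x) + cyl_len (digit_prefix n x) * (luroth_map ^^ n) x"
    using assms
  proof (induction n arbitrary: x)
    case (Suc n)
    note step = luroth_step[OF Suc.prems]
    note IH = Suc.IH[OF step(2,3)]
    define a where "a = luroth_a1 x"
    define u where "u = digit_prefix n (luroth_map x)"
    define y where "y = (luroth_map ^^ n) (luroth_map x)"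
    have "x = 1 / real_of_int a + luroth_map x / (real_of_int a * (real_of_int a - 1))"
      using step(4) by (simp add: a_def)
    also have "luroth_map x = cyl_start u + cyl_len u * y" using IH by (simp add: u_def y_def)
    finally have "x = cyl_start (a # u) + cyl_len (a # u) * y" by (simp add: add_divide_distrib)
    moreover have "digit_prefix (Suc n) x = a # u"
      by (simp add: digit_prefix_Suc a_def u_def)
    moreover have "(luroth_map ^^ Suc n) x = y"
      by (simp add: funpow_Suc_right y_def del: funpow.simps)
    moreover have "admissible (a # u)" "0 < y" "y \<le> 1"
      using IH step(1) by (simp_all add: a_def u_def y_def)
    ultimately show ?case by simp
  qed simp
  then show "admissible (digit_prefix n x)" "0 < (luroth_map ^^ n) x" "(luroth_map ^^ n) x \<le> 1"
    "x = cyl_start (digit_prefix n x) + cyl_len (digit_prefix n x) * (luroth_map ^^ n) x"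
    by auto
qed

lemma point_in_prefix_cylinder:
  assumes "0 < x" "x \<le> 1"
  shows "cyl_start (digit_prefix n x) < x" "x \<le> cyl_start (digit_prefix n x) + cyl_len (digit_prefix n x)"
proof -
  note e = luroth_expansion[OF assms, of n]
  have len: "cyl_len (digit_prefix n x) > 0" using cyl_bounds(2)[OF e(1)] .
  have "cyl_len (digit_prefix n x) * (luroth_map ^^ n) x > 0" using e(2) len by simp
  then show "cyl_start (digit_prefix n x) < x" using e(4) by linarith
  have "cyl_len (digit_prefix n x) * (luroth_map ^^ n) x \<le> cyl_len (digit_prefix n x)"
    using e len by (simp add: mult_le_cancel_left1)
  then show "x \<le> cyl_start (digit_prefix n x) + cyl_len (digit_prefix n x)" using e(4) by linarith
qed

lemma point_le_next_digit_bound: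
  assumes "0 < x" "x \<le> 1"
  shows "x \<le> cyl_start (digit_prefix n x)
              + cyl_len (digit_prefix n x) / (real_of_int (luroth_digit (Suc n) x) - 1)"
proof -
  have "luroth_digit (Suc n) x \<ge> 2"
    using luroth_expansion(1)[OF assms, of "Suc n"] by (simp add: digit_prefix_snoc)
  then show ?thesis
    using point_in_prefix_cylinder(2)[OF assms, of "Suc n"] by (simp add: digit_prefix_snoc cyl_end_snoc)
qed

section \<open>Hausdorff measure\<close>

lemma powr_add_le:
  fixes d e t :: real
  assumes "d \<ge> 0" "e \<ge> 0" "t > 0"
  shows "(d + e) powr t \<le> 2 powr t * (d powr t + e powr t)"
proof -
  have "(d + e) powr t \<le> (2 * max d e) powr t"
    using assms by (intro powr_mono2) auto
  also have "\<dots> = 2 powr t * max d e powr t"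
    by (simp add: powr_mult)
  also have "max d e powr t \<le> d powr t + e powr t"
    by (simp add: max_def)
  then have "2 powr t * max d e powr t \<le> 2 powr t * (d powr t + e powr t)"
    by (intro mult_left_mono) auto
  finally show ?thesis .
qed

lemma hausdorff_pre_antimono:
  "\<delta>' \<le> \<delta> \<Longrightarrow> hausdorff_pre t \<delta> E \<le> hausdorff_pre t \<delta>' E"
  unfolding hausdorff_pre_def by (rule INF_superset_mono) (auto intro: order_trans)

lemma hausdorff_pre_antimono_exponent:
  fixes E :: "'a::metric_space set"
  assumes "0 \<le> a" "a \<le> b" "\<delta> \<le> 1"
  shows "hausdorff_pre b \<delta> E \<le> hausdorff_pre a \<delta> E"
  unfolding hausdorff_pre_def
proof (rule INF_superset_mono[OF order_refl])
  fix U :: "nat \<Rightarrow> 'a set"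
  assume U: "U \<in> {U. E \<subseteq> (\<Union>i. U i) \<and> (\<forall>i. bounded (U i) \<and> diameter (U i) \<le> \<delta>)}"
  have "diameter (U i) powr b \<le> diameter (U i) powr a" for i
  proof -
    have "diameter (U i) \<le> \<delta>" "bounded (U i)" using U by blast+
    then have "0 \<le> diameter (U i)" "diameter (U i) \<le> 1"
      using diameter_ge_0[of "U i"] assms(3) by simp_all
    then show ?thesis using assms(1,2) by (intro powr_mono') auto
  qed
  then show "(\<Sum>i. ennreal (diameter (U i) powr b)) \<le> (\<Sum>i. ennreal (diameter (U i) powr a))"
    by (intro suminf_le ennreal_leI) auto
qed

lemma hausdorff_measure_antimono_exponent:
  fixes E :: "'a::metric_space set"
  assumes "0 \<le> a" "a \<le> b"
  shows "hausdorff_measure b E \<le> hausdorff_measure a E"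
  unfolding hausdorff_measure_def
proof (rule SUP_least)
  fix \<delta> :: real assume "\<delta> \<in> {0<..}"
  then have \<delta>1: "min \<delta> 1 \<in> {0<..}" by simp
  have "hausdorff_pre b \<delta> E \<le> hausdorff_pre a (min \<delta> 1) E"
    using hausdorff_pre_antimono[of "min \<delta> 1" \<delta> b E] hausdorff_pre_antimono_exponent[OF assms, of "min \<delta> 1" E]
    by simp
  also have "\<dots> \<le> (SUP \<delta>\<in>{0<..}. hausdorff_pre a \<delta> E)"
    using \<delta>1 by (rule SUP_upper)
  finally show "hausdorff_pre b \<delta> E \<le> (SUP \<delta>\<in>{0<..}. hausdorff_pre a \<delta> E)" .
qed

lemma hausdorff_dim_eqI:
  fixes E :: "'a::metric_space set"
  assumes "0 \<le> d"
    and pos: "\<And>t. 0 < t \<Longrightarrow> t < d \<Longrightarrow> hausdorff_measure t E \<noteq> 0"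
    and null: "\<And>t. d < t \<Longrightarrow> hausdorff_measure t E = 0"
  shows "hausdorff_dim E = d"
  unfolding hausdorff_dim_def
proof (rule cInf_eq_non_empty)
  show "{t. 0 \<le> t \<and> hausdorff_measure t E = 0} \<noteq> {}"
    using null[of "d + 1"] assms(1) by force
next
  fix x assume x: "x \<in> {t. 0 \<le> t \<and> hausdorff_measure t E = 0}"
  show "d \<le> x"
  proof (rule ccontr)
    assume "\<not> d \<le> x"
    define t where "t = (x + d) / 2"
    have t: "0 < t" "t < d" "x \<le> t" using x \<open>\<not> d \<le> x\<close> by (auto simp: t_def)
    have "hausdorff_measure t E \<le> hausdorff_measure x E"
      using x t by (intro hausdorff_measure_antimono_exponent) auto
    then show False using pos[OF t(1,2)] x by simp
  qed
next
  fix y assume y: "\<And>x. x \<in> {t. 0 \<le> t \<and> hausdorff_measure t E = 0} \<Longrightarrow> y \<le> x"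
  show "y \<le> d"
  proof (rule ccontr)
    assume "\<not> y \<le> d"
    then have "(d + y) / 2 \<in> {t. 0 \<le> t \<and> hausdorff_measure t E = 0}"
      using null[of "(d + y) / 2"] assms(1) by auto
    then show False using y \<open>\<not> y \<le> d\<close> by fastforce
  qed
qed

lemma hausdorff_pre_le_finite_cover:
  fixes E :: "'a::metric_space set" and U :: "'i \<Rightarrow> 'a set"
  assumes I: "finite I" and cover: "E \<subseteq> (\<Union>i\<in>I. U i)"
    and bd: "\<And>i. i \<in> I \<Longrightarrow> bounded (U i)" and diam: "\<And>i. i \<in> I \<Longrightarrow> diameter (U i) \<le> D"
    and D: "0 \<le> D" "D \<le> \<delta>" and t: "t > 0"
  shows "hausdorff_pre t \<delta> E \<le> ennreal (real (card I) * D powr t)"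
proof -
  obtain h where h: "bij_betw h {0..<card I} I"
    using ex_bij_betw_nat_finite[OF I] by blast
  define V where "V j = (if j < card I then U (h j) else {})" for j
  have "E \<subseteq> (\<Union>j. V j)"
  proof
    fix x assume "x \<in> E"
    then obtain i where "i \<in> I" "x \<in> U i" using cover by blast
    moreover from \<open>i \<in> I\<close> obtain j where "j < card I" "h j = i"
      using h unfolding bij_betw_def by (metis atLeastLessThan_iff imageE)
    ultimately show "x \<in> (\<Union>j. V j)" by (auto simp: V_def)
  qed
  moreover have hI: "j < card I \<Longrightarrow> h j \<in> I" for j
    using h by (auto simp: bij_betw_def)
  then have V: "bounded (V j)" "diameter (V j) \<le> D" for j
    using bd diam D by (auto simp: V_def)
  ultimately have "hausdorff_pre t \<delta> E \<le> (\<Sum>j. ennreal (diameter (V j) powr t))"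
    unfolding hausdorff_pre_def using D(2) by (intro INF_lower) (auto intro: order_trans)
  also have "\<dots> = (\<Sum>j<card I. ennreal (diameter (V j) powr t))"
    by (rule suminf_finite) (auto simp: V_def)
  also have "\<dots> \<le> (\<Sum>j<card I. ennreal (D powr t))"
    using V diameter_ge_0 t by (intro sum_mono ennreal_leI powr_mono2) auto
  also have "\<dots> = ennreal (real (card I) * D powr t)"
    by (simp add: ennreal_mult' ennreal_of_nat_eq_real_of_nat)
  finally show ?thesis .
qed

lemma ex_inflated_ball_cover:
  fixes U :: "nat \<Rightarrow> 'a::metric_space set"
  assumes bd: "\<And>i. bounded (U i)" and \<epsilon>: "\<epsilon> > 0" and t: "t > 0"
  obtains p \<rho> where "\<And>i. U i \<subseteq> ball (p i) (\<rho> i)" "\<And>i. \<rho> i > 0"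
    "\<And>F. finite F \<Longrightarrow> (\<Sum>i\<in>F. \<rho> i powr t) \<le> 2 powr t * ((\<Sum>i\<in>F. diameter (U i) powr t) + \<epsilon>)"
proof -
  define d where "d i = diameter (U i)" for i
  have d0: "d i \<ge> 0" for i using diameter_ge_0[OF bd[of i]] by (simp add: d_def)
  text \<open>The radius exceeds the diameter by \<open>\<eta> i\<close>, where the \<open>\<eta> i powr t\<close> sum to \<open>\<epsilon>\<close>.\<close>
  define \<eta> where "\<eta> i = (\<epsilon> * (1/2) ^ Suc i) powr (1/t)" for i
  have \<epsilon>_pow: "\<epsilon> * (1/2) ^ Suc i > 0" for i :: nat
    using \<epsilon> by simp
  have \<eta>: "\<eta> i > 0" for i
    unfolding \<eta>_def using \<epsilon>_pow[of i] by (simp only: powr_gt_zero)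
  have \<eta>t: "\<eta> i powr t = \<epsilon> * (1/2) ^ Suc i" for i
  proof -
    have "\<eta> i powr t = (\<epsilon> * (1/2) ^ Suc i) powr (1 / t * t)"
      unfolding \<eta>_def by (rule powr_powr)
    also have "\<dots> = \<epsilon> * (1/2) ^ Suc i"
      using t \<epsilon>_pow[of i] by simp
    finally show ?thesis .
  qed
  define p where "p i = (SOME x. x \<in> U i)" for i
  define \<rho> where "\<rho> i = d i + \<eta> i" for i
  show ?thesis
  proof (rule that)
    show "U i \<subseteq> ball (p i) (\<rho> i)" for i
    proof
      fix x assume x: "x \<in> U i"
      then have "p i \<in> U i" unfolding p_def by (rule someI)
      then have "dist (p i) x \<le> d i" unfolding d_def by (rule diameter_bounded_bound[OF bd _ x])
      then show "x \<in> ball (p i) (\<rho> i)" using \<eta>[of i] by (simp add: \<rho>_def)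
    qed
    show "\<rho> i > 0" for i using d0[of i] \<eta>[of i] by (simp add: \<rho>_def)
    fix F :: "nat set" assume F: "finite F"
    have "(\<Sum>i\<in>F. \<eta> i powr t) = (\<Sum>i\<in>F. \<epsilon> * (1/2) ^ Suc i)"
      by (simp only: \<eta>t)
    also have "\<dots> \<le> (\<Sum>i. \<epsilon> * (1/2) ^ Suc i)"
      using \<epsilon>_pow F by (intro sum_le_suminf summable_mult sums_summable[OF power_half_series]) (auto intro: less_imp_le)
    also have "\<dots> = \<epsilon>"
      using sums_unique[OF sums_mult[OF power_half_series, of \<epsilon>]] by simp
    finally have \<eta>_sum: "(\<Sum>i\<in>F. \<eta> i powr t) \<le> \<epsilon>" .
    have "(\<Sum>i\<in>F. \<rho> i powr t) \<le> (\<Sum>i\<in>F. 2 powr t * (d i powr t + \<eta> i powr t))"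
      unfolding \<rho>_def using powr_add_le[OF d0 less_imp_le[OF \<eta>] t] by (intro sum_mono) blast
    also have "\<dots> = 2 powr t * ((\<Sum>i\<in>F. d i powr t) + (\<Sum>i\<in>F. \<eta> i powr t))"
      by (simp only: sum_distrib_left[symmetric] sum.distrib)
    also have "\<dots> \<le> 2 powr t * ((\<Sum>i\<in>F. diameter (U i) powr t) + \<epsilon>)"
      using \<eta>_sum by (intro mult_left_mono add_left_mono) (simp_all add: d_def)
    finally show "(\<Sum>i\<in>F. \<rho> i powr t) \<le> 2 powr t * ((\<Sum>i\<in>F. diameter (U i) powr t) + \<epsilon>)" .
  qed
qed

text \<open>A form of the mass distribution principle: it suffices to control finite covers of \<open>E\<close> by
  open balls, because every cover can be inflated to one by balls at little extra cost.\<close>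
lemma hausdorff_measure_pos_of_ball_covers:
  fixes E :: "'a::metric_space set"
  assumes E: "compact E" and t: "t > 0" and K: "K > 0"
    and covers: "\<And>(F :: nat set) p \<rho>. finite F \<Longrightarrow> (\<And>j. j \<in> F \<Longrightarrow> \<rho> j > 0) \<Longrightarrow>
        E \<subseteq> (\<Union>j\<in>F. ball (p j) (\<rho> j)) \<Longrightarrow> 1 \<le> K * (\<Sum>j\<in>F. \<rho> j powr t)"
  shows "hausdorff_measure t E \<noteq> 0"
proof -
  define c where "c = K * 2 powr t"
  have c: "c > 0" using K by (simp add: c_def)
  define \<epsilon> where "\<epsilon> = 1 / (2 * c)"
  have \<epsilon>: "\<epsilon> > 0" using c by (simp add: \<epsilon>_def)
  have cover_sum: "ennreal \<epsilon> \<le> (\<Sum>i. ennreal (diameter (U i) powr t))"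
    if cov: "E \<subseteq> (\<Union>i. U i)" and bd: "\<And>i. bounded (U i)" for U :: "nat \<Rightarrow> 'a set"
  proof -
    obtain p \<rho> where U_ball: "\<And>i. U i \<subseteq> ball (p i) (\<rho> i)" and \<rho>: "\<And>i. \<rho> i > 0"
      and \<rho>_sum: "\<And>F. finite F \<Longrightarrow> (\<Sum>i\<in>F. \<rho> i powr t) \<le> 2 powr t * ((\<Sum>i\<in>F. diameter (U i) powr t) + \<epsilon>)"
      using ex_inflated_ball_cover[of U, OF bd \<epsilon> t] by blast
    have "(\<Union>i. U i) \<subseteq> (\<Union>i. ball (p i) (\<rho> i))"
      using U_ball by (intro UN_mono) auto
    with cov have "E \<subseteq> (\<Union>i\<in>UNIV. ball (p i) (\<rho> i))" by (rule order.trans)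
    then obtain F where F: "finite F" "E \<subseteq> (\<Union>i\<in>F. ball (p i) (\<rho> i))"
      using compactE_image[OF E, of UNIV "\<lambda>i. ball (p i) (\<rho> i)"] by auto
    have "1 \<le> K * (\<Sum>j\<in>F. \<rho> j powr t)"
      using covers[OF F(1) \<rho> F(2)] .
    also have "\<dots> \<le> c * ((\<Sum>i\<in>F. diameter (U i) powr t) + \<epsilon>)"
      unfolding c_def mult.assoc using \<rho>_sum[OF F(1)] K by (intro mult_left_mono) auto
    finally have "1 / c \<le> (\<Sum>i\<in>F. diameter (U i) powr t) + \<epsilon>"
      using c by (simp add: divide_le_eq mult.commute)
    moreover have "1 / c = 2 * \<epsilon>"
      by (simp add: \<epsilon>_def)
    ultimately have "\<epsilon> \<le> (\<Sum>i\<in>F. diameter (U i) powr t)" by linarith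
    then have "ennreal \<epsilon> \<le> ennreal (\<Sum>i\<in>F. diameter (U i) powr t)"
      by (rule ennreal_leI)
    also have "\<dots> = (\<Sum>i\<in>F. ennreal (diameter (U i) powr t))"
      by (rule sum_ennreal[symmetric]) simp
    also have "\<dots> \<le> (\<Sum>i. ennreal (diameter (U i) powr t))"
      by (rule sum_le_suminf) (use F(1) in auto)
    finally show ?thesis .
  qed
  have "ennreal \<epsilon> \<le> hausdorff_pre t 1 E"
    unfolding hausdorff_pre_def by (rule INF_greatest) (use cover_sum in auto)
  also have "\<dots> \<le> hausdorff_measure t E"
    unfolding hausdorff_measure_def by (rule SUP_upper) simp
  finally show ?thesis using \<epsilon> by auto
qed

lemma le_powr_if_le_min:
  fixes c y t :: real
  assumes "0 < y" "0 < t" "t < 1" "c \<le> 1" "c \<le> y"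
  shows "c \<le> y powr t"
proof (cases "y \<ge> 1")
  case True
  then show ?thesis using assms ge_one_powr_ge_zero[of y t] by linarith
next
  case False
  then have "y powr 1 \<le> y powr t" using assms by (intro powr_mono') auto
  then show ?thesis using assms by simp
qed

lemma two_thirds_gap_le:
  fixes a b :: real
  assumes "0 < a" "a + 1 \<le> b"
  shows "2 / 3 * ((b - a) / (a * b)) \<le> 1 / a - (1 / b + 1 / (3 * b * (b - 1)))"
proof -
  have "1 / (b * (b - 1)) = 1 / (b - 1) - 1 / b"
    using assms by (simp add: field_simps)
  also have "\<dots> \<le> 1 / a - 1 / b"
    using assms by (simp add: frac_le)
  finally have h: "1 / (b * (b - 1)) \<le> 1 / a - 1 / b" .
  have "1 / a - 1 / b = (b - a) / (a * b)"
    using assms by (simp add: field_simps)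
  then have "2 / 3 * ((b - a) / (a * b)) = (1 / a - 1 / b) - 1 / 3 * (1 / a - 1 / b)"
    by simp
  also have "\<dots> \<le> (1 / a - 1 / b) - 1 / 3 * (1 / (b * (b - 1)))"
    using h by simp
  also have "\<dots> = 1 / a - (1 / b + 1 / (3 * b * (b - 1)))"
    by simp
  finally show ?thesis .
qed

lemma card_le_twice_Max_minus_Min:
  fixes D :: "int set"
  assumes "finite D" "card D \<ge> 2"
  shows "real (card D) \<le> 2 * (real_of_int (Max D) - real_of_int (Min D))" "Min D < Max D"
proof -
  have "D \<noteq> {}" using assms(2) by auto
  then have D: "D \<subseteq> {Min D..Max D}" using assms(1) by auto
  show "Min D < Max D"
  proof (rule ccontr)
    assume "\<not> Min D < Max D"
    then have "D \<subseteq> {Min D}" using D by auto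
    then have "card D \<le> 1" using card_mono[of "{Min D}" D] by simp
    then show False using assms(2) by simp
  qed
  have "card D \<le> card {Min D..Max D}" using D by (intro card_mono) auto
  then show "real (card D) \<le> 2 * (real_of_int (Max D) - real_of_int (Min D))"
    using \<open>Min D < Max D\<close> by simp
qed

lemma ex_first_failure: "P 0 \<Longrightarrow> \<not> P n \<Longrightarrow> \<exists>k. P k \<and> \<not> P (Suc k)"
  by (induction n) auto

section \<open>The set of points with restricted digits\<close>

locale restricted_luroth =
  fixes s :: "nat \<Rightarrow> int" and N :: int
  assumes s_ge: "\<And>n. n \<ge> 1 \<Longrightarrow> s n \<ge> 4"
    and N_ge: "N \<ge> 2"
begin

definition E :: "real set" where
  "E = {x. 0 < x \<and> x \<le> 1 \<and> (\<forall>n\<ge>1. s n \<le> luroth_digit n x \<and> luroth_digit n x \<le> N * s n - 1)}"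

definition digit_range :: "nat \<Rightarrow> int set" where
  "digit_range k = {s k .. N * s k - 1}"

definition words :: "nat \<Rightarrow> int list set" where
  "words n = {w. length w = n \<and> (\<forall>i<n. w ! i \<in> digit_range (Suc i))}"

definition sprod :: "nat \<Rightarrow> real" where
  "sprod n = (\<Prod>i<n. real_of_int (s (Suc i)))"

lemma s_Suc_ge: "s (Suc i) \<ge> 4"
  using s_ge by simp

lemma digit_range_ge: "a \<in> digit_range (Suc i) \<Longrightarrow> a \<ge> 4"
  using s_Suc_ge[of i] by (simp add: digit_range_def)

lemma finite_digit_range: "finite (digit_range k)"
  by (simp add: digit_range_def)

lemma card_digit_range: "real (card (digit_range (Suc k))) = real_of_int (N - 1) * real_of_int (s (Suc k))"
  using N_ge s_Suc_ge[of k] by (simp add: digit_range_def algebra_simps)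

lemma digit_prefix_in_words_iff:
  "digit_prefix n x \<in> words n \<longleftrightarrow> (\<forall>i<n. luroth_digit (Suc i) x \<in> digit_range (Suc i))"
  by (simp add: words_def)

lemma mem_E_iff_digit_prefix:
  "x \<in> E \<longleftrightarrow> 0 < x \<and> x \<le> 1 \<and> (\<forall>n. digit_prefix n x \<in> words n)"
proof -
  have "(\<forall>n\<ge>1. luroth_digit n x \<in> digit_range n) \<longleftrightarrow> (\<forall>n. digit_prefix n x \<in> words n)"
    unfolding digit_prefix_in_words_iff
  proof (intro iffI allI impI)
    fix n i :: nat
    assume "\<forall>n\<ge>1. luroth_digit n x \<in> digit_range n"
    then show "luroth_digit (Suc i) x \<in> digit_range (Suc i)" by simp
  next
    fix n :: nat
    assume h: "\<forall>n i. i < n \<longrightarrow> luroth_digit (Suc i) x \<in> digit_range (Suc i)" and "n \<ge> 1"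
    then obtain m where "n = Suc m" by (cases n) auto
    then show "luroth_digit n x \<in> digit_range n"
      using h by blast
  qed
  then show ?thesis by (simp add: E_def digit_range_def)
qed

lemma words_ge_4: "w \<in> words n \<Longrightarrow> i < n \<Longrightarrow> w ! i \<ge> 4"
  by (auto simp: words_def intro: digit_range_ge)

lemma words_admissible:
  assumes "w \<in> words n"
  shows "admissible w"
proof -
  have "length w = n" using assms by (simp add: words_def)
  show ?thesis
    unfolding admissible_def
  proof
    fix a assume "a \<in> set w"
    then obtain i where "i < n" "w ! i = a"
      using \<open>length w = n\<close> by (auto simp: in_set_conv_nth)
    then show "a \<ge> 2" using words_ge_4[OF assms, of i] by simp
  qed
qed

lemma words_0 [simp]: "words 0 = {[]}"
  by (auto simp: words_def)

lemma words_Suc: "words (Suc n) = (\<lambda>(u, a). u @ [a]) ` (words n \<times> digit_range (Suc n))"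
proof (intro set_eqI iffI)
  fix w assume w: "w \<in> words (Suc n)"
  then have "length w = Suc n" by (simp add: words_def)
  then have "w = butlast w @ [w ! n]"
    by (metis append_butlast_last_id diff_Suc_1 last_conv_nth length_0_conv nat.distinct(1))
  moreover have "butlast w \<in> words n" "w ! n \<in> digit_range (Suc n)"
    using w by (auto simp: words_def nth_butlast)
  ultimately show "w \<in> (\<lambda>(u, a). u @ [a]) ` (words n \<times> digit_range (Suc n))"
    by (intro image_eqI[of _ _ "(butlast w, w ! n)"]) auto
qed (auto simp: words_def nth_append less_Suc_eq)

lemma finite_words: "finite (words n)"
  by (induction n) (simp_all add: words_Suc finite_digit_range)

lemma card_words: "real (card (words n)) = real_of_int (N - 1) ^ n * sprod n"
proof (induction n)
  case (Suc n)
  have "inj_on (\<lambda>(u, a). u @ [a]) (words n \<times> digit_range (Suc n))"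
    by (auto simp: inj_on_def)
  then have "real (card (words (Suc n))) = real (card (words n)) * real (card (digit_range (Suc n)))"
    by (simp add: words_Suc card_image card_cartesian_product)
  also have "\<dots> = real_of_int (N - 1) ^ n * sprod n * (real_of_int (N - 1) * real_of_int (s (Suc n)))"
    by (simp only: Suc.IH card_digit_range)
  also have "\<dots> = real_of_int (N - 1) ^ Suc n * sprod (Suc n)"
    by (simp add: sprod_def)
  finally show ?case .
qed (simp add: sprod_def)

lemma sprod_ge_1: "sprod n \<ge> 1"
  unfolding sprod_def using s_Suc_ge by (intro prod_ge_1) (simp add: order.trans[of 1 4])

lemma sprod_pos: "sprod n > 0"
  using sprod_ge_1[of n] by simp

lemma card_words_ge: "real (card (words n)) \<ge> 4 ^ n"
proof -
  have "(4::real) ^ n = (\<Prod>i<n. 4)"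
    by simp
  also have "\<dots> \<le> (\<Prod>i<n. real_of_int (s (Suc i)))"
    using s_Suc_ge by (intro prod_mono) simp
  also have "\<dots> \<le> real_of_int (N - 1) ^ n * sprod n"
    using N_ge sprod_pos[of n] by (simp add: sprod_def one_le_power)
  finally show ?thesis by (simp add: card_words)
qed

lemma card_words_pos: "real (card (words n)) > 0"
proof -
  have "(0::real) < 4 ^ n" by simp
  then show ?thesis using card_words_ge[of n] by linarith
qed

lemma digit_prefix_eq_word:
  assumes "w \<in> words n" "cyl_start w < x" "x \<le> cyl_start w + cyl_len w"
  shows "digit_prefix n x = w"
proof -
  have "length w = n" using assms(1) by (simp add: words_def)
  then show ?thesis
    using digit_prefix_of_cylinder(1)[OF words_admissible[OF assms(1)] assms(2,3)] by simp
qed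

lemma E_eq_cylinder_intersection:
  "E = (\<Inter>n. \<Union>w\<in>words n. {cyl_start w .. cyl_start w + cyl_len w})"
proof (intro equalityI subsetI)
  fix x assume x: "x \<in> E"
  then have x01: "0 < x" "x \<le> 1" and "\<And>n. digit_prefix n x \<in> words n"
    by (auto simp: mem_E_iff_digit_prefix)
  show "x \<in> (\<Inter>n. \<Union>w\<in>words n. {cyl_start w .. cyl_start w + cyl_len w})"
  proof (intro INT_I UN_I)
    fix n
    show "digit_prefix n x \<in> words n" by fact
    show "x \<in> {cyl_start (digit_prefix n x) .. cyl_start (digit_prefix n x) + cyl_len (digit_prefix n x)}"
      using point_in_prefix_cylinder[OF x01, of n] by simp
  qed
next
  fix x assume x: "x \<in> (\<Inter>n. \<Union>w\<in>words n. {cyl_start w .. cyl_start w + cyl_len w})"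
  have inner: "\<exists>u\<in>words n. cyl_start u < x \<and> x < cyl_start u + cyl_len u" for n
  proof -
    obtain w where w: "w \<in> words (Suc n)" "cyl_start w \<le> x" "x \<le> cyl_start w + cyl_len w"
      using x by fastforce
    then obtain u a where ua: "w = u @ [a]" "u \<in> words n" "a \<in> digit_range (Suc n)"
      unfolding words_Suc by (auto simp: image_iff)
    have "a \<ge> 3" using digit_range_ge[OF ua(3)] by simp
    note sub = subcylinder_interior[OF words_admissible[OF ua(2)] this]
    have "cyl_start u < x" "x < cyl_start u + cyl_len u"
      using sub w(2,3) unfolding ua(1) by blast+
    with ua(2) show ?thesis by blast
  qed
  obtain u0 where "u0 \<in> words 0" "cyl_start u0 < x" "x < cyl_start u0 + cyl_len u0"
    using inner by blast
  then have x01: "0 < x" "x \<le> 1" by auto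
  have "digit_prefix n x \<in> words n" for n
  proof -
    obtain u where u: "u \<in> words n" "cyl_start u < x" "x < cyl_start u + cyl_len u"
      using inner by blast
    then have "digit_prefix n x = u" by (intro digit_prefix_eq_word) auto
    with u(1) show ?thesis by simp
  qed
  then show "x \<in> E" using x01 by (simp add: mem_E_iff_digit_prefix)
qed

lemma compact_E: "compact E"
proof -
  have "closed E"
    unfolding E_eq_cylinder_intersection using finite_words by (intro closed_INT closed_UN) auto
  moreover have "bounded E"
    by (rule bounded_subset[of "{0..1}"]) (auto simp: E_def)
  ultimately show ?thesis by (simp add: compact_eq_bounded_closed)
qed

lemma ex_point_with_prefix:
  assumes w: "w \<in> words n"
  shows "\<exists>x\<in>E. digit_prefix n x = w"
proof -
  define d where "d i = (if i < n then w ! i else s (Suc i))" for i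
  define v where "v m = map d [0..<m]" for m
  have v_words: "v m \<in> words m" for m
  proof -
    have "d i \<in> digit_range (Suc i)" for i
    proof (cases "i < n")
      case False
      have "2 * s (Suc i) \<le> N * s (Suc i)" using N_ge s_Suc_ge[of i] by (intro mult_right_mono) auto
      then show ?thesis using False s_Suc_ge[of i] by (simp add: d_def digit_range_def)
    qed (use w in \<open>auto simp: d_def words_def\<close>)
    then show ?thesis by (auto simp: words_def v_def)
  qed
  have v_Suc: "v (Suc m) = v m @ [d m]" for m
    by (simp add: v_def)
  have d_ge: "d m \<ge> 3" for m
    using v_words[of "Suc m"] words_ge_4[of "v (Suc m)" "Suc m" m] by (simp add: v_def nth_append)
  define X where "X m = {cyl_start (v m) .. cyl_start (v m) + cyl_len (v m)}" for m
  have X_Suc: "X (Suc m) \<subseteq> X m" for m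
  proof
    fix y assume "y \<in> X (Suc m)"
    then have "cyl_start (v m) < y" "y < cyl_start (v m) + cyl_len (v m)"
      using subcylinder_interior[OF words_admissible[OF v_words[of m]] d_ge[of m]]
      by (auto simp: X_def v_Suc)
    then show "y \<in> X m" by (simp add: X_def)
  qed
  have "\<Inter>(range X) \<noteq> {}"
  proof (rule compact_nest)
    show "X m \<noteq> {}" for m
      using cyl_bounds(2)[OF words_admissible[OF v_words[of m]]] by (simp add: X_def)
    show "m \<le> k \<Longrightarrow> X k \<subseteq> X m" for m k
      using decseqD[OF decseq_SucI[of X, OF X_Suc]] by blast
  qed (simp add: X_def)
  then obtain x where x: "\<And>m. x \<in> X m" by blast
  then have "x \<in> E"
    unfolding E_eq_cylinder_intersection X_def using v_words by blast
  moreover have "v n = w"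
    using w by (intro nth_equalityI) (auto simp: v_def d_def words_def)
  then have "cyl_start w < x" "x < cyl_start w + cyl_len w"
    using subcylinder_interior[OF words_admissible[OF w] d_ge, of n x] x[of "Suc n"]
    by (auto simp: X_def v_Suc)
  ultimately show ?thesis using digit_prefix_eq_word[OF w] by force
qed

lemma cyl_len_lower:
  assumes w: "w \<in> words k"
  shows "1 / (real_of_int N ^ (2 * k) * sprod k ^ 2) \<le> cyl_len w"
proof -
  have "(\<Prod>i<k. (real_of_int N * real_of_int (s (Suc i)))^2) = real_of_int N ^ (2 * k) * sprod k ^ 2"
    by (simp add: sprod_def power_mult power_mult_distrib prod.distrib prod_power_distrib)
  then have "1 / (real_of_int N ^ (2 * k) * sprod k ^ 2) = (\<Prod>i<k. 1 / (real_of_int N * real_of_int (s (Suc i)))^2)"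
    by (simp add: prod_dividef)
  also have "\<dots> \<le> (\<Prod>i<k. 1 / (real_of_int (w ! i) * (real_of_int (w ! i) - 1)))"
  proof (rule prod_mono)
    fix i assume i: "i \<in> {..<k}"
    have a4: "real_of_int (w ! i) \<ge> 4" using words_ge_4[OF w] i by simp
    have "w ! i \<le> N * s (Suc i) - 1" using w i by (auto simp: words_def digit_range_def)
    then have aN: "real_of_int (w ! i) \<le> real_of_int N * real_of_int (s (Suc i))"
      by (simp flip: of_int_mult)
    have "real_of_int (w ! i) * (real_of_int (w ! i) - 1) \<le> real_of_int (w ! i) * real_of_int (w ! i)"
      using a4 by simp
    also have "\<dots> \<le> (real_of_int N * real_of_int (s (Suc i)))^2"
      using a4 aN by (simp add: power2_eq_square mult_mono)
    finally show "0 \<le> 1 / (real_of_int N * real_of_int (s (Suc i)))^2 \<and>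
        1 / (real_of_int N * real_of_int (s (Suc i)))^2 \<le> 1 / (real_of_int (w ! i) * (real_of_int (w ! i) - 1))"
      using a4 by (simp add: frac_le)
  qed
  also have "\<dots> = cyl_len w"
    using w by (simp add: cyl_len_eq_prod words_def)
  finally show ?thesis .
qed

lemma cyl_len_upper:
  assumes w: "w \<in> words k"
  shows "cyl_len w \<le> 2 ^ k / sprod k ^ 2"
proof -
  have "cyl_len w = (\<Prod>i<k. 1 / (real_of_int (w ! i) * (real_of_int (w ! i) - 1)))"
    using w by (simp add: cyl_len_eq_prod words_def)
  also have "\<dots> \<le> (\<Prod>i<k. 2 / real_of_int (s (Suc i)) ^ 2)"
  proof (rule prod_mono)
    fix i assume i: "i \<in> {..<k}"
    have s4: "real_of_int (s (Suc i)) \<ge> 4" using s_Suc_ge[of i] by simp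
    have "s (Suc i) \<le> w ! i" using w i by (auto simp: words_def digit_range_def)
    then have "real_of_int (s (Suc i)) * (real_of_int (s (Suc i)) / 2)
        \<le> real_of_int (w ! i) * (real_of_int (w ! i) - 1)"
      using s4 by (intro mult_mono) auto
    moreover have "0 < real_of_int (s (Suc i)) * (real_of_int (s (Suc i)) / 2)"
      using s4 by simp
    ultimately have "1 / (real_of_int (w ! i) * (real_of_int (w ! i) - 1))
        \<le> 1 / (real_of_int (s (Suc i)) * (real_of_int (s (Suc i)) / 2))"
      by (intro frac_le) simp_all
    moreover have "0 < real_of_int (w ! i) * (real_of_int (w ! i) - 1)"
      using s4 \<open>s (Suc i) \<le> w ! i\<close> by (simp add: mult_pos_pos)
    moreover have "1 / (real_of_int (s (Suc i)) * (real_of_int (s (Suc i)) / 2)) = 2 / real_of_int (s (Suc i)) ^ 2"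
      by (simp add: power2_eq_square)
    ultimately show "0 \<le> 1 / (real_of_int (w ! i) * (real_of_int (w ! i) - 1)) \<and>
        1 / (real_of_int (w ! i) * (real_of_int (w ! i) - 1)) \<le> 2 / real_of_int (s (Suc i)) ^ 2"
      by simp
  qed
  also have "\<dots> = 2 ^ k / sprod k ^ 2"
    by (simp add: sprod_def prod_dividef prod_power_distrib)
  finally show ?thesis .
qed

text \<open>\<open>prefix_mass S n\<close> is the mass that the uniform distribution on \<open>E\<close>, which gives each word
  of \<open>words n\<close> the weight \<open>1 / card (words n)\<close>, puts on the level-\<open>n\<close> cylinders meeting \<open>S\<close>.\<close>
definition prefix_mass :: "real set \<Rightarrow> nat \<Rightarrow> real" where
  "prefix_mass S n = real (card (digit_prefix n ` S)) / real (card (words n))"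

lemma digit_prefix_image_subset: "S \<subseteq> E \<Longrightarrow> digit_prefix n ` S \<subseteq> words n"
  by (auto simp: mem_E_iff_digit_prefix)

lemma finite_digit_prefix_image: "S \<subseteq> E \<Longrightarrow> finite (digit_prefix n ` S)"
  using finite_subset[OF digit_prefix_image_subset finite_words] .

lemma card_digit_prefix_Suc_le:
  assumes "S \<subseteq> E"
  shows "real (card (digit_prefix (Suc n) ` S))
    \<le> real (card (digit_prefix n ` S)) * (real_of_int (N - 1) * real_of_int (s (Suc n)))"
proof -
  have "digit_prefix (Suc n) ` S \<subseteq> (\<lambda>(u, a). u @ [a]) ` (digit_prefix n ` S \<times> digit_range (Suc n))"
  proof
    fix v assume "v \<in> digit_prefix (Suc n) ` S"
    then obtain x where x: "x \<in> S" "v = digit_prefix (Suc n) x" by auto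
    have "digit_prefix (Suc n) x \<in> words (Suc n)" using x assms by (auto simp: mem_E_iff_digit_prefix)
    then have "luroth_digit (Suc n) x \<in> digit_range (Suc n)" by (simp add: digit_prefix_in_words_iff)
    then show "v \<in> (\<lambda>(u, a). u @ [a]) ` (digit_prefix n ` S \<times> digit_range (Suc n))"
      using x by (auto simp: digit_prefix_snoc)
  qed
  then have "card (digit_prefix (Suc n) ` S) \<le> card ((\<lambda>(u, a). u @ [a]) ` (digit_prefix n ` S \<times> digit_range (Suc n)))"
    using finite_digit_prefix_image[OF assms] finite_digit_range by (intro card_mono) auto
  also have "\<dots> \<le> card (digit_prefix n ` S \<times> digit_range (Suc n))"
    using finite_digit_prefix_image[OF assms] finite_digit_range by (intro card_image_le) auto
  also have "\<dots> = card (digit_prefix n ` S) * card (digit_range (Suc n))"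
    by (rule card_cartesian_product)
  finally have "real (card (digit_prefix (Suc n) ` S))
      \<le> real (card (digit_prefix n ` S)) * real (card (digit_range (Suc n)))"
    by (metis of_nat_le_iff of_nat_mult)
  then show ?thesis by (simp only: card_digit_range)
qed

lemma prefix_mass_Suc_le:
  assumes "S \<subseteq> E"
  shows "prefix_mass S (Suc n) \<le> prefix_mass S n"
proof -
  define M where "M = real_of_int (N - 1) * real_of_int (s (Suc n))"
  have M: "M > 0" using N_ge s_Suc_ge[of n] by (simp add: M_def)
  have "real (card (words (Suc n))) = real (card (words n)) * M"
    by (simp add: card_words sprod_def M_def)
  then have "prefix_mass S (Suc n) = real (card (digit_prefix (Suc n) ` S)) / (real (card (words n)) * M)"
    by (simp add: prefix_mass_def)
  also have "\<dots> \<le> real (card (digit_prefix n ` S)) * M / (real (card (words n)) * M)"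
    using card_digit_prefix_Suc_le[OF assms, of n] card_words_pos[of n] M
    by (intro divide_right_mono) (auto simp: M_def)
  also have "\<dots> = prefix_mass S n"
    using M by (simp add: prefix_mass_def)
  finally show ?thesis .
qed

lemma digit_prefix_eq_if_card_le_1:
  assumes "S \<subseteq> E" "card (digit_prefix k ` S) \<le> 1" "x \<in> S" "y \<in> S"
  shows "digit_prefix k x = digit_prefix k y"
proof -
  have "finite (digit_prefix k ` S)" by (rule finite_digit_prefix_image[OF assms(1)])
  moreover have "card (digit_prefix k ` S) \<le> Suc 0" using assms(2) by simp
  ultimately have "\<forall>u\<in>digit_prefix k ` S. \<forall>v\<in>digit_prefix k ` S. u = v"
    using card_le_Suc0_iff_eq by blast
  moreover have "digit_prefix k x \<in> digit_prefix k ` S" "digit_prefix k y \<in> digit_prefix k ` S"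
    using assms(3,4) by simp_all
  ultimately show ?thesis by blast
qed

lemma prefix_mass_antimono: "S \<subseteq> E \<Longrightarrow> m \<le> n \<Longrightarrow> prefix_mass S n \<le> prefix_mass S m"
  using lift_Suc_antimono_le[of "prefix_mass S"] prefix_mass_Suc_le by blast

lemma one_le_sum_prefix_mass:
  assumes "finite F" "E \<subseteq> (\<Union>j\<in>F. B j)"
  shows "1 \<le> (\<Sum>j\<in>F. prefix_mass (E \<inter> B j) n)"
proof -
  have "words n \<subseteq> (\<Union>j\<in>F. digit_prefix n ` (E \<inter> B j))"
  proof
    fix w assume "w \<in> words n"
    then obtain x where "x \<in> E" "digit_prefix n x = w" using ex_point_with_prefix by blast
    then show "w \<in> (\<Union>j\<in>F. digit_prefix n ` (E \<inter> B j))" using assms(2) by blast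
  qed
  then have "card (words n) \<le> card (\<Union>j\<in>F. digit_prefix n ` (E \<inter> B j))"
    using assms(1) finite_digit_prefix_image by (intro card_mono) auto
  also have "\<dots> \<le> (\<Sum>j\<in>F. card (digit_prefix n ` (E \<inter> B j)))"
    by (rule card_UN_le[OF assms(1)])
  finally have "real (card (words n)) \<le> (\<Sum>j\<in>F. real (card (digit_prefix n ` (E \<inter> B j))))"
    by (metis of_nat_le_iff of_nat_sum)
  then show ?thesis
    using card_words_pos[of n] by (simp add: prefix_mass_def sum_divide_distrib[symmetric] divide_le_eq_1)
qed

subsection \<open>Lower bound for the dimension\<close>

lemma E_digit_in_range: "x \<in> E \<Longrightarrow> luroth_digit (Suc n) x \<in> digit_range (Suc n)"
  using digit_prefix_in_words_iff[of "Suc n" x] by (auto simp: mem_E_iff_digit_prefix)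

lemma digit_gap_le_dist:
  assumes x1: "x1 \<in> E" and x2: "x2 \<in> E"
    and w: "digit_prefix k x1 = w" "digit_prefix k x2 = w"
    and A: "luroth_digit (Suc k) x1 = A" and B: "luroth_digit (Suc k) x2 = B" and AB: "A < B"
  shows "2 / 3 * cyl_len w * ((real_of_int B - real_of_int A) / (real_of_int A * real_of_int B)) \<le> x1 - x2"
proof -
  define a where "a = real_of_int A"
  define b where "b = real_of_int B"
  have x1': "0 < x1" "x1 \<le> 1" and x2': "0 < x2" "x2 \<le> 1"
    using x1 x2 by (simp_all add: E_def)
  have a: "a \<ge> 4" using E_digit_in_range[OF x1, of k] digit_range_ge by (force simp: a_def A)
  have ab: "a + 1 \<le> b" using AB by (simp add: a_def b_def)
  have len: "cyl_len w > 0"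
    using cyl_bounds(2)[OF luroth_expansion(1)[OF x1', of k]] by (simp add: w(1))
  have "cyl_start (w @ [A]) < x1"
    using point_in_prefix_cylinder(1)[OF x1', of "Suc k"] by (simp add: digit_prefix_snoc w(1) A)
  then have X1: "cyl_start w + cyl_len w * (1 / a) < x1"
    by (simp add: cyl_start_append a_def)
  text \<open>The digit of \<open>x2\<close> after \<open>B\<close> is at least 4, which keeps \<open>x2\<close> in the first third
    of the cylinder of \<open>w @ [B]\<close>.\<close>
  define e where "e = real_of_int (luroth_digit (Suc (Suc k)) x2)"
  have e: "e \<ge> 4"
    using E_digit_in_range[OF x2, of "Suc k"] digit_range_ge by (force simp: e_def)
  have "x2 \<le> cyl_start (w @ [B]) + cyl_len (w @ [B]) / (e - 1)"
    using point_le_next_digit_bound[OF x2', of "Suc k"] by (simp add: digit_prefix_snoc w(2) B e_def)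
  also have "\<dots> = cyl_start w + cyl_len w * (1 / b + 1 / (b * (b - 1) * (e - 1)))"
    by (simp add: cyl_start_append cyl_len_append b_def field_simps)
  also have "\<dots> \<le> cyl_start w + cyl_len w * (1 / b + 1 / (3 * b * (b - 1)))"
  proof -
    have "3 * b * (b - 1) \<le> b * (b - 1) * (e - 1)"
      using a ab e by (simp add: mult.commute mult_left_mono)
    moreover have "0 < 3 * b * (b - 1)" using a ab by simp
    ultimately have "1 / (b * (b - 1) * (e - 1)) \<le> 1 / (3 * b * (b - 1))"
      by (intro divide_left_mono) auto
    then show ?thesis using len by (intro add_left_mono mult_left_mono) auto
  qed
  finally have X2: "x2 \<le> cyl_start w + cyl_len w * (1 / b + 1 / (3 * b * (b - 1)))" .
  have "cyl_len w * (2 / 3 * ((b - a) / (a * b)))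
      \<le> cyl_len w * (1 / a - (1 / b + 1 / (3 * b * (b - 1))))"
    using len a ab by (intro mult_left_mono two_thirds_gap_le) auto
  then show ?thesis
    using X1 X2 by (simp add: a_def b_def algebra_simps)
qed

lemma next_digit_spread_le:
  assumes x1: "x1 \<in> E" and x2: "x2 \<in> E" and dist: "x1 - x2 < 2 * \<rho>"
    and w: "digit_prefix k x1 = w" "digit_prefix k x2 = w"
    and A: "luroth_digit (Suc k) x1 = A" and B: "luroth_digit (Suc k) x2 = B" and AB: "A < B"
  shows "real_of_int B - real_of_int A
    \<le> 3 * \<rho> * (real_of_int N * real_of_int (s (Suc k)))^2 * (real_of_int N ^ (2 * k) * sprod k ^ 2)"
proof -
  define L where "L = cyl_len w"
  define P where "P = real_of_int A * real_of_int B"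
  define Q where "Q = (real_of_int N * real_of_int (s (Suc k)))^2"
  define R where "R = real_of_int N ^ (2 * k) * sprod k ^ 2"
  have "2 / 3 * L * ((real_of_int B - real_of_int A) / P) \<le> x1 - x2"
    unfolding L_def P_def by (rule digit_gap_le_dist[OF x1 x2 w A B AB])
  with dist have gap: "2 / 3 * L * ((real_of_int B - real_of_int A) / P) < 2 * \<rho>" by linarith
  have A4: "A \<ge> 4" using E_digit_in_range[OF x1, of k] digit_range_ge A by blast
  have "B \<le> N * s (Suc k) - 1" using E_digit_in_range[OF x2, of k] B by (simp add: digit_range_def)
  then have "real_of_int A * real_of_int B
      \<le> (real_of_int N * real_of_int (s (Suc k))) * (real_of_int N * real_of_int (s (Suc k)))"
    using A4 AB by (intro mult_mono) (auto simp flip: of_int_mult)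
  then have PQ: "P \<le> Q" by (simp add: P_def Q_def power2_eq_square)
  have "digit_prefix k x1 \<in> words k" using x1 by (simp add: mem_E_iff_digit_prefix)
  then have LR: "1 / R \<le> L" using cyl_len_lower w(1) by (simp add: L_def R_def)
  have P: "P > 0" using A4 AB by (simp add: P_def)
  have R: "R > 0" using sprod_pos[of k] N_ge by (simp add: R_def)
  have "0 < 1 / R" using R by simp
  then have L: "L > 0" using LR by linarith
  have "0 < 2 / 3 * L * ((real_of_int B - real_of_int A) / P)" using L P AB by simp
  then have "\<rho> > 0" using gap by linarith
  have "real_of_int B - real_of_int A < 3 * \<rho> * (P / L)"
    using gap P L by (simp add: field_simps)
  also have "\<dots> \<le> 3 * \<rho> * (Q * R)"
  proof -
    have "1 \<le> L * R" using LR R by (simp add: field_simps)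
    then have "Q * 1 \<le> Q * (L * R)" using PQ P by (intro mult_left_mono) auto
    then have "P \<le> Q * R * L" using PQ by (simp add: ac_simps)
    then have "P / L \<le> Q * R" by (simp add: pos_divide_le_eq[OF L])
    then show ?thesis using \<open>\<rho> > 0\<close> by (intro mult_left_mono) auto
  qed
  finally show ?thesis by (simp add: Q_def R_def mult.assoc)
qed

lemma card_next_digits_le:
  assumes S: "S \<subseteq> E \<inter> ball p \<rho>" and w: "\<And>x. x \<in> S \<Longrightarrow> digit_prefix k x = w"
    and two: "card (digit_prefix (Suc k) ` S) \<ge> 2"
  shows "real (card (digit_prefix (Suc k) ` S))
    \<le> 6 * \<rho> * (real_of_int N * real_of_int (s (Suc k)))^2 * (real_of_int N ^ (2 * k) * sprod k ^ 2)"
proof -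
  define D where "D = (\<lambda>x. luroth_digit (Suc k) x) ` S"
  have "digit_prefix (Suc k) ` S = (\<lambda>a. w @ [a]) ` D"
    unfolding D_def image_image using w by (auto simp: digit_prefix_snoc intro!: image_cong)
  then have card_D: "card (digit_prefix (Suc k) ` S) = card D"
    by (simp add: card_image inj_on_def)
  have "D \<subseteq> digit_range (Suc k)"
    using S E_digit_in_range by (auto simp: D_def)
  then have fin: "finite D" using finite_subset finite_digit_range by blast
  note spread = card_le_twice_Max_minus_Min[OF fin two[unfolded card_D]]
  obtain x1 x2 where x12: "x1 \<in> S" "x2 \<in> S"
    and A: "luroth_digit (Suc k) x1 = Min D" and B: "luroth_digit (Suc k) x2 = Max D"
    using Min_in[OF fin] Max_in[OF fin] two card_D by (fastforce simp: D_def)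
  have "dist p x1 < \<rho>" "dist p x2 < \<rho>" using x12 S by auto
  then have "x1 - x2 < 2 * \<rho>" by (simp add: dist_real_def abs_less_iff)
  with x12 S have "real_of_int (Max D) - real_of_int (Min D)
      \<le> 3 * \<rho> * (real_of_int N * real_of_int (s (Suc k)))^2 * (real_of_int N ^ (2 * k) * sprod k ^ 2)"
    by (intro next_digit_spread_le[OF _ _ _ w w A B spread(2)]) auto
  then show ?thesis using spread(1) card_D by simp
qed

text \<open>A bound on \<open>holder_ratio t\<close> makes the uniform distribution on \<open>E\<close> give mass
  \<open>O(\<rho> ^ t)\<close> to balls of radius \<open>\<rho>\<close>.\<close>
definition holder_ratio :: "real \<Rightarrow> nat \<Rightarrow> real" where
  "holder_ratio t k = (real_of_int (s (Suc k)) * real_of_int N ^ (2 * k) * sprod k ^ 2) powr t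
      / real (card (words k))"

lemma holder_ratio_pos: "holder_ratio t k > 0"
  using sprod_pos[of k] s_Suc_ge[of k] card_words_pos[of k] N_ge by (simp add: holder_ratio_def)

lemma prefix_mass_split_level_le:
  assumes t: "0 < t" "t < 1" and S: "S \<subseteq> E \<inter> ball p \<rho>"
    and one: "card (digit_prefix k ` S) \<le> 1" and two: "card (digit_prefix (Suc k) ` S) \<ge> 2"
  shows "prefix_mass S (Suc k)
    \<le> (6 * real_of_int N ^ 2 / (real_of_int N - 1)) powr t * \<rho> powr t * holder_ratio t k"
proof -
  have "S \<noteq> {}" using two by auto
  then obtain x0 where x0: "x0 \<in> S" by blast
  have "dist p x0 < \<rho>" using x0 S by auto
  then have \<rho>: "\<rho> > 0" using zero_le_dist[of p x0] by linarith
  have SE: "S \<subseteq> E" using S by blast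
  have w: "digit_prefix k x = digit_prefix k x0" if "x \<in> S" for x
    by (rule digit_prefix_eq_if_card_le_1[OF SE one that x0])
  define c where "c = real (card (digit_prefix (Suc k) ` S))"
  define M where "M = real_of_int (N - 1) * real_of_int (s (Suc k))"
  define C' where "C' = 6 * real_of_int N ^ 2 / (real_of_int N - 1)"
  define R where "R = real_of_int N ^ (2 * k) * sprod k ^ 2"
  define Z where "Z = real_of_int (s (Suc k)) * real_of_int N ^ (2 * k) * sprod k ^ 2"
  define Y where "Y = C' * \<rho> * Z"
  have N1: "real_of_int N - 1 > 0" using N_ge by simp
  have M: "M > 0" using N_ge s_Suc_ge[of k] by (simp add: M_def)
  have C': "C' > 0" using N1 by (simp add: C'_def)
  have Z: "Z > 0" using N_ge s_Suc_ge[of k] sprod_pos[of k] by (simp add: Z_def)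
  have "c \<le> real (card (digit_prefix k ` S)) * M"
    unfolding c_def M_def by (rule card_digit_prefix_Suc_le[OF SE])
  also have "\<dots> \<le> 1 * M"
    using one M by (intro mult_right_mono) auto
  finally have cM: "c \<le> M" by simp
  have hC: "(real_of_int N - 1) * C' = 6 * real_of_int N ^ 2"
    using N1 by (simp add: C'_def)
  have "M * Y = ((real_of_int N - 1) * C') * (\<rho> * real_of_int (s (Suc k)) ^ 2 * R)"
    by (simp add: M_def Y_def Z_def R_def power2_eq_square algebra_simps)
  also have "\<dots> = 6 * \<rho> * (real_of_int N * real_of_int (s (Suc k)))^2 * R"
    unfolding hC by (simp add: power_mult_distrib algebra_simps)
  finally have "c \<le> M * Y"
    using card_next_digits_le[OF S w two] by (simp add: c_def R_def)
  then have "c / M \<le> Y" using M by (simp add: divide_le_eq mult.commute)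
  moreover have "c / M \<le> 1" using cM M by simp
  moreover have "Y > 0" using C' \<rho> Z by (simp add: Y_def)
  ultimately have cMY: "c / M \<le> Y powr t"
    using t by (intro le_powr_if_le_min) auto
  have "real (card (words (Suc k))) = real (card (words k)) * M"
    by (simp add: card_words M_def sprod_def)
  then have "prefix_mass S (Suc k) = c / M / real (card (words k))"
    by (simp add: prefix_mass_def c_def)
  also have "\<dots> \<le> Y powr t / real (card (words k))"
    using cMY card_words_pos[of k] by (intro divide_right_mono) auto
  also have "\<dots> = C' powr t * \<rho> powr t * (Z powr t / real (card (words k)))"
    using C' \<rho> Z by (simp add: Y_def powr_mult)
  finally show ?thesis
    by (simp add: holder_ratio_def Z_def C'_def)
qed

lemma prefix_mass_ball_le:
  assumes t: "0 < t" "t < 1" and G: "\<And>k. holder_ratio t k \<le> G" and \<rho>: "\<rho> > 0"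
  shows "\<forall>\<^sub>F n in sequentially.
    prefix_mass (E \<inter> ball p \<rho>) n \<le> (6 * real_of_int N ^ 2 / (real_of_int N - 1)) powr t * G * \<rho> powr t"
proof -
  define S where "S = E \<inter> ball p \<rho>"
  define bound where "bound = (6 * real_of_int N ^ 2 / (real_of_int N - 1)) powr t * G * \<rho> powr t"
  have "G > 0" using G[of 0] holder_ratio_pos[of t 0] by linarith
  then have bound: "bound > 0" using N_ge \<rho> by (simp add: bound_def)
  show ?thesis
  proof (cases "\<forall>n. card (digit_prefix n ` S) \<le> 1")
    case True
    have "(\<lambda>n. (1/4::real) ^ n) \<longlonglongrightarrow> 0" by (rule LIMSEQ_realpow_zero) auto
    then have "\<forall>\<^sub>F n in sequentially. (1/4) ^ n < bound" using bound by (rule order_tendstoD)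
    moreover have "prefix_mass S n \<le> (1/4) ^ n" for n
    proof -
      have "prefix_mass S n \<le> 1 / real (card (words n))"
        using True[rule_format, of n] card_words_pos[of n]
        by (simp add: prefix_mass_def divide_right_mono)
      also have "\<dots> \<le> 1 / 4 ^ n"
        using card_words_ge[of n] card_words_pos[of n] by (intro divide_left_mono) auto
      finally show ?thesis by (simp add: power_one_over)
    qed
    ultimately show ?thesis
      unfolding S_def[symmetric] bound_def[symmetric]
      by (metis (mono_tags, lifting) eventually_mono less_imp_le order_trans)
  next
    case False
    then obtain n where "\<not> card (digit_prefix n ` S) \<le> 1" by blast
    moreover have "card (digit_prefix 0 ` S) \<le> 1"
      using card_mono[of "{[]}" "digit_prefix 0 ` S"] by auto
    ultimately obtain k where k: "card (digit_prefix k ` S) \<le> 1" "\<not> card (digit_prefix (Suc k) ` S) \<le> 1"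
      using ex_first_failure[of "\<lambda>n. card (digit_prefix n ` S) \<le> 1"] by blast
    have "prefix_mass S (Suc k)
        \<le> (6 * real_of_int N ^ 2 / (real_of_int N - 1)) powr t * \<rho> powr t * holder_ratio t k"
      using k by (intro prefix_mass_split_level_le[OF t]) (auto simp: S_def)
    also have "\<dots> \<le> (6 * real_of_int N ^ 2 / (real_of_int N - 1)) powr t * \<rho> powr t * G"
      by (intro mult_left_mono G) simp
    also have "\<dots> = bound"
      by (simp add: bound_def ac_simps)
    finally have mass_k: "prefix_mass S (Suc k) \<le> bound" .
    have "prefix_mass S n \<le> bound" if "n \<ge> Suc k" for n
      using prefix_mass_antimono[of S "Suc k" n] that mass_k by (force simp: S_def)
    then show ?thesis
      unfolding S_def bound_def eventually_sequentially by blast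
  qed
qed

lemma hausdorff_measure_E_pos:
  assumes t: "0 < t" "t < 1" and G: "\<And>k. holder_ratio t k \<le> G"
  shows "hausdorff_measure t E \<noteq> 0"
proof -
  define K where "K = (6 * real_of_int N ^ 2 / (real_of_int N - 1)) powr t * G"
  have "K > 0"
    using G[of 0] holder_ratio_pos[of t 0] N_ge by (simp add: K_def)
  then show ?thesis
  proof (rule hausdorff_measure_pos_of_ball_covers[OF compact_E t(1)])
    fix F :: "nat set" and p \<rho>
    assume F: "finite F" and \<rho>: "\<And>j. j \<in> F \<Longrightarrow> \<rho> j > 0"
      and cover: "E \<subseteq> (\<Union>j\<in>F. ball (p j) (\<rho> j))"
    have "\<forall>\<^sub>F n in sequentially. \<forall>j\<in>F. prefix_mass (E \<inter> ball (p j) (\<rho> j)) n \<le> K * \<rho> j powr t"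
      using F prefix_mass_ball_le[OF t G \<rho>] by (intro eventually_ball_finite) (auto simp: K_def)
    then obtain n where n: "\<forall>j\<in>F. prefix_mass (E \<inter> ball (p j) (\<rho> j)) n \<le> K * \<rho> j powr t"
      unfolding eventually_sequentially by blast
    have "1 \<le> (\<Sum>j\<in>F. prefix_mass (E \<inter> ball (p j) (\<rho> j)) n)"
      by (rule one_le_sum_prefix_mass[OF F cover])
    also have "\<dots> \<le> (\<Sum>j\<in>F. K * \<rho> j powr t)"
      using n by (intro sum_mono) blast
    finally show "1 \<le> K * (\<Sum>j\<in>F. \<rho> j powr t)"
      by (simp add: sum_distrib_left)
  qed
qed

subsection \<open>Upper bound for the dimension\<close>

lemma ln_sprod: "ln (sprod n) = (\<Sum>i<n. ln (real_of_int (s (Suc i))))"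
  unfolding sprod_def
proof (rule ln_prod)
  show "real_of_int (s (Suc i)) \<noteq> 0" for i using s_Suc_ge[of i] by simp
qed simp

lemma ln_sprod_nonneg: "ln (sprod n) \<ge> 0"
  using sprod_ge_1[of n] by simp

lemma E_subset_cylinder_heads:
  "E \<subseteq> (\<Union>w\<in>words n. {cyl_start w .. cyl_start w + cyl_len w / (real_of_int (s (Suc n)) - 1)})"
proof
  fix x assume x: "x \<in> E"
  then have x01: "0 < x" "x \<le> 1" and w: "digit_prefix n x \<in> words n"
    by (simp_all add: mem_E_iff_digit_prefix)
  have len: "cyl_len (digit_prefix n x) > 0"
    using cyl_bounds(2)[OF words_admissible[OF w]] .
  have sn: "real_of_int (s (Suc n)) \<ge> 4" using s_Suc_ge[of n] by simp
  have "s (Suc n) \<le> luroth_digit (Suc n) x"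
    using E_digit_in_range[OF x, of n] by (simp add: digit_range_def)
  then have "cyl_len (digit_prefix n x) / (real_of_int (luroth_digit (Suc n) x) - 1)
      \<le> cyl_len (digit_prefix n x) / (real_of_int (s (Suc n)) - 1)"
    using len sn by (intro divide_left_mono) auto
  then have "x \<in> {cyl_start (digit_prefix n x) ..
      cyl_start (digit_prefix n x) + cyl_len (digit_prefix n x) / (real_of_int (s (Suc n)) - 1)}"
    using point_in_prefix_cylinder(1)[OF x01, of n] point_le_next_digit_bound[OF x01, of n] by simp
  with w show "x \<in> (\<Union>w\<in>words n. {cyl_start w .. cyl_start w + cyl_len w / (real_of_int (s (Suc n)) - 1)})"
    by blast
qed

lemma diameter_cylinder_head_le:
  assumes "w \<in> words n"
  shows "diameter {cyl_start w .. cyl_start w + cyl_len w / (real_of_int (s (Suc n)) - 1)}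
    \<le> 2 ^ n / sprod n ^ 2 / (real_of_int (s (Suc n)) - 1)"
proof -
  have sn: "real_of_int (s (Suc n)) - 1 > 0" using s_Suc_ge[of n] by simp
  have "0 \<le> cyl_len w / (real_of_int (s (Suc n)) - 1)"
    using cyl_bounds(2)[OF words_admissible[OF assms]] sn by simp
  then have "diameter {cyl_start w .. cyl_start w + cyl_len w / (real_of_int (s (Suc n)) - 1)}
      = cyl_len w / (real_of_int (s (Suc n)) - 1)"
    by simp
  also have "\<dots> \<le> 2 ^ n / sprod n ^ 2 / (real_of_int (s (Suc n)) - 1)"
    using cyl_len_upper[OF assms] sn by (intro divide_right_mono) auto
  finally show ?thesis .
qed

definition dim_ratio :: "nat \<Rightarrow> real" where
  "dim_ratio n = ln (sprod n) / (2 * ln (sprod n) + ln (real_of_int (s (Suc n))))"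

lemma dim_ratio_denom_pos: "2 * ln (sprod n) + ln (real_of_int (s (Suc n))) > 0"
proof -
  have "ln (real_of_int (s (Suc n))) > 0" using s_Suc_ge[of n] by simp
  then show ?thesis using ln_sprod_nonneg[of n] by linarith
qed

lemma dim_ratio_bounds: "0 \<le> dim_ratio n" "dim_ratio n \<le> 1/2"
proof -
  show "0 \<le> dim_ratio n"
    unfolding dim_ratio_def using dim_ratio_denom_pos[of n] ln_sprod_nonneg[of n] by simp
  have "ln (real_of_int (s (Suc n))) > 0" using s_Suc_ge[of n] by simp
  then have "ln (sprod n) \<le> 1/2 * (2 * ln (sprod n) + ln (real_of_int (s (Suc n))))" by simp
  then show "dim_ratio n \<le> 1/2"
    unfolding dim_ratio_def using dim_ratio_denom_pos[of n] by (simp add: divide_le_eq)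
qed

lemma dim_ratio_less_iff:
  "dim_ratio n < c \<longleftrightarrow> ln (sprod n) < c * (2 * ln (sprod n) + ln (real_of_int (s (Suc n))))"
  unfolding dim_ratio_def using dim_ratio_denom_pos[of n] by (simp add: divide_less_eq)

lemma less_dim_ratio_iff:
  "c < dim_ratio n \<longleftrightarrow> c * (2 * ln (sprod n) + ln (real_of_int (s (Suc n)))) < ln (sprod n)"
  unfolding dim_ratio_def using dim_ratio_denom_pos[of n] by (simp add: less_divide_eq)

text \<open>The next estimates turn a bound on \<open>dim_ratio\<close> into a bound on a product of powers of
  \<open>sprod n\<close>; factors exponential in \<open>n\<close> are absorbed since \<open>ln (sprod n)\<close> eventually exceeds
  every linear function of \<open>n\<close> (lemma \<open>ln_sprod_superlinear\<close>).\<close>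

lemma cylinder_size_le:
  fixes \<delta> :: real
  assumes \<delta>: "\<delta> > 0" and growth: "(ln 2 + \<bar>ln \<delta>\<bar>) / 2 * (real n + 1) \<le> ln (sprod n)"
  shows "2 ^ n / sprod n ^ 2 \<le> \<delta>"
proof -
  have P: "sprod n > 0" by (rule sprod_pos)
  have "ln (2 ^ n / sprod n ^ 2) = real n * ln 2 - 2 * ln (sprod n)"
    using P by (simp add: ln_divide_pos ln_realpow)
  also have "\<dots> \<le> ln \<delta>"
  proof -
    have "(ln 2 + \<bar>ln \<delta>\<bar>) * (real n + 1) \<le> 2 * ln (sprod n)" using growth by simp
    moreover have "(ln 2 + \<bar>ln \<delta>\<bar>) * (real n + 1) = real n * ln 2 + ln 2 + (real n + 1) * \<bar>ln \<delta>\<bar>"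
      by (simp add: algebra_simps)
    moreover have "(real n + 1) * \<bar>ln \<delta>\<bar> \<ge> 1 * \<bar>ln \<delta>\<bar>" by (intro mult_right_mono) auto
    moreover have "ln (2::real) \<ge> 0" by simp
    ultimately show ?thesis by linarith
  qed
  finally show ?thesis using P \<delta> by simp
qed

lemma cover_cost_le:
  fixes t t' e :: real
  assumes t: "0 \<le> t'" "t' < t" "t \<le> 1" and e: "e > 0" and ratio: "dim_ratio n < t'"
    and growth: "(ln (real_of_int N) + ln 2 + \<bar>ln e\<bar>) / (2 * (t - t')) * (real n + 1) \<le> ln (sprod n)"
  shows "real_of_int N ^ n * sprod n * (2 ^ Suc n / (sprod n ^ 2 * real_of_int (s (Suc n)))) powr t \<le> e"
proof -
  define lP where "lP = ln (sprod n)"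
  define \<sigma> where "\<sigma> = ln (real_of_int (s (Suc n)))"
  define L where "L = ln (real_of_int N)"
  define Z where "Z = real_of_int N ^ n * sprod n * (2 ^ Suc n / (sprod n ^ 2 * real_of_int (s (Suc n)))) powr t"
  have N: "real_of_int N \<ge> 2" using N_ge by simp
  have sn: "real_of_int (s (Suc n)) \<ge> 4" using s_Suc_ge[of n] by simp
  have P: "sprod n > 0" by (rule sprod_pos)
  have Z: "Z > 0" using N P sn by (simp add: Z_def)
  have "ln ((2::real) ^ Suc n / (sprod n ^ 2 * real_of_int (s (Suc n))))
      = ln ((2::real) ^ Suc n) - ln (sprod n ^ 2 * real_of_int (s (Suc n)))"
    using P sn by (intro ln_divide_pos) auto
  also have "\<dots> = (real n + 1) * ln 2 - (2 * lP + \<sigma>)"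
    using P sn by (simp add: ln_mult ln_realpow lP_def \<sigma>_def distrib_right)
  finally have ln_base: "ln ((2::real) ^ Suc n / (sprod n ^ 2 * real_of_int (s (Suc n))))
      = (real n + 1) * ln 2 - (2 * lP + \<sigma>)" .
  have "ln Z = ln (real_of_int N ^ n) + ln (sprod n)
      + ln ((2 ^ Suc n / (sprod n ^ 2 * real_of_int (s (Suc n)))) powr t)"
    unfolding Z_def using N P sn by (simp add: ln_mult)
  then have lnZ: "ln Z = real n * L + lP + t * ((real n + 1) * ln 2) - t * (2 * lP + \<sigma>)"
    unfolding ln_powr ln_base using N by (simp add: ln_realpow lP_def L_def algebra_simps)
  have "lP < t' * (2 * lP + \<sigma>)"
    using ratio by (simp add: dim_ratio_less_iff lP_def \<sigma>_def)
  moreover have "t * (2 * lP + \<sigma>) = t' * (2 * lP + \<sigma>) + 2 * ((t - t') * lP) + (t - t') * \<sigma>"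
    by (simp add: algebra_simps)
  moreover have "(t - t') * \<sigma> \<ge> 0" using t sn by (simp add: \<sigma>_def)
  moreover have "t * ((real n + 1) * ln 2) \<le> (real n + 1) * ln 2"
    using t by (simp add: mult_left_le_one_le)
  moreover have "(L + ln 2 + \<bar>ln e\<bar>) * (real n + 1) \<le> 2 * ((t - t') * lP)"
  proof -
    have "(L + ln 2 + \<bar>ln e\<bar>) / (2 * (t - t')) * (real n + 1) \<le> lP"
      using growth by (simp add: lP_def L_def)
    then show ?thesis using t by (simp add: field_simps)
  qed
  moreover have "real n * L + (real n + 1) * ln 2 + \<bar>ln e\<bar> \<le> (L + ln 2 + \<bar>ln e\<bar>) * (real n + 1)"
  proof -
    have "L \<ge> 0" using N by (simp add: L_def)
    moreover have "1 * \<bar>ln e\<bar> \<le> (real n + 1) * \<bar>ln e\<bar>" by (intro mult_right_mono) auto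
    ultimately show ?thesis by (simp add: algebra_simps)
  qed
  moreover have "- \<bar>ln e\<bar> \<le> ln e" by simp
  ultimately have "ln Z \<le> ln e" unfolding lnZ by linarith
  then show ?thesis using Z e by (simp add: Z_def)
qed

lemma holder_ratio_le_one:
  fixes t t2 :: real
  assumes t: "0 < t" "t < t2" and ratio: "t2 < dim_ratio k"
    and growth: "t * ln (real_of_int N) / (t2 - t) * (real k + 1) \<le> ln (sprod k)"
  shows "holder_ratio t k \<le> 1"
proof -
  define lP where "lP = ln (sprod k)"
  define \<sigma> where "\<sigma> = ln (real_of_int (s (Suc k)))"
  define L where "L = ln (real_of_int N)"
  define L1 where "L1 = ln (real_of_int N - 1)"
  have N: "real_of_int N \<ge> 2" using N_ge by simp
  have sk: "real_of_int (s (Suc k)) \<ge> 4" using s_Suc_ge[of k] by simp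
  have P: "sprod k > 0" by (rule sprod_pos)
  have "ln (real_of_int (s (Suc k)) * real_of_int N ^ (2 * k) * sprod k ^ 2) = \<sigma> + 2 * real k * L + 2 * lP"
    using N P sk by (simp add: ln_mult ln_realpow \<sigma>_def L_def lP_def)
  moreover have "ln (real (card (words k))) = real k * L1 + lP"
    using N P by (simp add: card_words ln_mult ln_realpow L1_def lP_def)
  ultimately have ln_ratio: "ln (holder_ratio t k) = t * \<sigma> + 2 * (t * L * real k) + 2 * (t * lP) - (real k * L1 + lP)"
    using N P sk card_words_pos[of k]
    by (simp add: holder_ratio_def ln_div ln_powr algebra_simps)
  have "t2 * (2 * lP + \<sigma>) < lP"
    using ratio by (simp add: less_dim_ratio_iff lP_def \<sigma>_def)
  moreover have "t * \<sigma> \<le> t2 * \<sigma>" using t sk by (intro mult_right_mono) (auto simp: \<sigma>_def)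
  moreover have "t * L * (real k + 1) \<le> (t2 - t) * lP"
    using growth t by (simp add: field_simps lP_def L_def)
  moreover have "t * L * real k \<le> t * L * (real k + 1)"
    using t N by (intro mult_left_mono) (auto simp: L_def)
  moreover have "real k * L1 \<ge> 0" using N by (simp add: L1_def)
  ultimately have "ln (holder_ratio t k) \<le> 0"
    unfolding ln_ratio by (simp add: algebra_simps)
  then show ?thesis using holder_ratio_pos[of t k] by simp
qed

end

section \<open>The dimension\<close>

locale restricted_luroth_unbounded = restricted_luroth +
  assumes s_lim: "filterlim s at_top sequentially"
begin

lemma ln_sprod_superlinear: "\<forall>\<^sub>F n in sequentially. c * (real n + 1) \<le> ln (sprod n)"
proof -
  have "filterlim (\<lambda>i. real_of_int (s (Suc i))) at_top sequentially"
    using filterlim_compose[OF filterlim_real_of_int_at_top filterlim_compose[OF s_lim filterlim_Suc]]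
    by (simp add: comp_def)
  then have "\<forall>\<^sub>F i in sequentially. exp (2 * \<bar>c\<bar>) < real_of_int (s (Suc i))"
    by (simp add: filterlim_at_top_dense)
  then obtain i0 where i0: "\<And>i. i \<ge> i0 \<Longrightarrow> exp (2 * \<bar>c\<bar>) < real_of_int (s (Suc i))"
    by (auto simp: eventually_sequentially)
  have ln_large: "2 * \<bar>c\<bar> \<le> ln (real_of_int (s (Suc i)))" if "i \<ge> i0" for i
  proof -
    have "exp (2 * \<bar>c\<bar>) \<le> real_of_int (s (Suc i))" using i0[OF that] by simp
    then have "ln (exp (2 * \<bar>c\<bar>)) \<le> ln (real_of_int (s (Suc i)))"
      using s_Suc_ge[of i] by (subst ln_le_cancel_iff) auto
    then show ?thesis by simp
  qed
  have ln_nonneg: "0 \<le> ln (real_of_int (s (Suc i)))" for i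
    using s_Suc_ge[of i] by simp
  have "c * (real n + 1) \<le> ln (sprod n)" if n: "n \<ge> 2 * i0 + 1" for n
  proof -
    have "real (n - i0) * (2 * \<bar>c\<bar>) = (\<Sum>i\<in>{i0..<n}. 2 * \<bar>c\<bar>)"
      by simp
    also have "\<dots> \<le> (\<Sum>i\<in>{i0..<n}. ln (real_of_int (s (Suc i))))"
      using ln_large by (intro sum_mono) auto
    also have "\<dots> \<le> (\<Sum>i<n. ln (real_of_int (s (Suc i))))"
      using ln_nonneg by (intro sum_mono2) auto
    also have "\<dots> = ln (sprod n)"
      by (simp add: ln_sprod)
    finally have "real (n - i0) * (2 * \<bar>c\<bar>) \<le> ln (sprod n)" .
    moreover have "real n + 1 \<le> 2 * real (n - i0)" using n by linarith
    then have "c * (real n + 1) \<le> \<bar>c\<bar> * (2 * real (n - i0))"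
      by (smt (verit) abs_ge_self mult_right_mono mult_left_mono abs_ge_zero of_nat_0_le_iff)
    ultimately show ?thesis by (simp add: algebra_simps)
  qed
  then show ?thesis
    unfolding eventually_sequentially by blast
qed

lemma hausdorff_measure_E_zero:
  assumes t: "0 \<le> t'" "t' < t" "t < 1"
    and freq: "\<exists>\<^sub>F n in sequentially. dim_ratio n < t'"
  shows "hausdorff_measure t E = 0"
proof -
  have "hausdorff_pre t \<delta> E \<le> ennreal e" if \<delta>: "\<delta> > 0" and e: "e > 0" for \<delta> e :: real
  proof -
    define c where "c = max ((ln 2 + \<bar>ln \<delta>\<bar>) / 2) ((ln (real_of_int N) + ln 2 + \<bar>ln e\<bar>) / (2 * (t - t')))"
    have "\<exists>\<^sub>F n in sequentially. c * (real n + 1) \<le> ln (sprod n) \<and> dim_ratio n < t'"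
      using freq ln_sprod_superlinear by (rule frequently_eventually_conj)
    then obtain n where n: "dim_ratio n < t'" and growth: "c * (real n + 1) \<le> ln (sprod n)"
      by (auto dest: frequently_ex)
    have growth1: "(ln 2 + \<bar>ln \<delta>\<bar>) / 2 * (real n + 1) \<le> ln (sprod n)"
      using growth by (smt (verit) c_def max.cobounded1 mult_right_mono of_nat_0_le_iff)
    have growth2: "(ln (real_of_int N) + ln 2 + \<bar>ln e\<bar>) / (2 * (t - t')) * (real n + 1) \<le> ln (sprod n)"
      using growth by (smt (verit) c_def max.cobounded2 mult_right_mono of_nat_0_le_iff)
    define sn where "sn = real_of_int (s (Suc n))"
    have sn: "sn \<ge> 4" using s_Suc_ge[of n] by (simp add: sn_def)
    define D where "D = 2 ^ n / sprod n ^ 2 / (sn - 1)"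
    have D0: "D \<ge> 0" using sn by (simp add: D_def)
    have "D \<le> 2 ^ n / sprod n ^ 2 / 1"
      unfolding D_def using sn by (intro divide_left_mono) auto
    also have "\<dots> \<le> \<delta>" using cylinder_size_le[OF \<delta> growth1] by simp
    finally have D\<delta>: "D \<le> \<delta>" .
    have "D \<le> 2 ^ Suc n / (sprod n ^ 2 * sn)"
      using sn sprod_pos[of n] by (simp add: D_def field_simps)
    then have "real (card (words n)) * D powr t
        \<le> real_of_int N ^ n * sprod n * (2 ^ Suc n / (sprod n ^ 2 * sn)) powr t"
      using N_ge sprod_pos[of n] D0 t
      by (intro mult_mono powr_mono2) (auto simp: card_words intro!: power_mono)
    also have "\<dots> \<le> e"
      using cover_cost_le[OF t(1,2) _ e n growth2] t by (simp add: sn_def)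
    finally have cost: "real (card (words n)) * D powr t \<le> e" .
    have diam: "diameter {cyl_start w .. cyl_start w + cyl_len w / (real_of_int (s (Suc n)) - 1)} \<le> D"
      if "w \<in> words n" for w
      using diameter_cylinder_head_le[OF that] by (simp only: D_def sn_def)
    have "hausdorff_pre t \<delta> E \<le> ennreal (real (card (words n)) * D powr t)"
      using t by (intro hausdorff_pre_le_finite_cover[OF finite_words E_subset_cylinder_heads _ diam D0 D\<delta>]) auto
    also have "\<dots> \<le> ennreal e"
      using cost by (rule ennreal_leI)
    finally show ?thesis .
  qed
  then have "hausdorff_pre t \<delta> E = 0" if "\<delta> > 0" for \<delta>
    using that by (metis add_0 ennreal_le_epsilon le_zero_eq)
  then show ?thesis
    unfolding hausdorff_measure_def by (simp add: SUP_eq_const)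
qed

lemma holder_ratio_bounded:
  assumes t: "0 < t" "t < t2" and ratio: "\<forall>\<^sub>F k in sequentially. t2 < dim_ratio k"
  shows "\<exists>G. \<forall>k. holder_ratio t k \<le> G"
proof -
  have "\<forall>\<^sub>F k in sequentially. holder_ratio t k \<le> 1"
    using ratio ln_sprod_superlinear[of "t * ln (real_of_int N) / (t2 - t)"]
    by eventually_elim (rule holder_ratio_le_one[OF t])
  then obtain K where K: "\<And>k. k \<ge> K \<Longrightarrow> holder_ratio t k \<le> 1"
    by (auto simp: eventually_sequentially)
  have "holder_ratio t k \<le> 1 + (\<Sum>j<K. holder_ratio t j)" for k
  proof (cases "k < K")
    case True
    then have "holder_ratio t k \<le> (\<Sum>j<K. holder_ratio t j)"
      using holder_ratio_pos by (intro member_le_sum) (auto intro: less_imp_le)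
    then show ?thesis by simp
  next
    case False
    moreover have "0 \<le> (\<Sum>j<K. holder_ratio t j)"
      using holder_ratio_pos by (intro sum_nonneg) (auto intro: less_imp_le)
    ultimately show ?thesis using K[of k] by simp
  qed
  then show ?thesis by blast
qed

lemma hausdorff_dim_E: "hausdorff_dim E = real_of_ereal (liminf (\<lambda>n. ereal (dim_ratio n)))"
proof -
  define L where "L = liminf (\<lambda>n. ereal (dim_ratio n))"
  have "ereal 0 \<le> L" unfolding L_def by (rule Liminf_bounded) (use dim_ratio_bounds in auto)
  moreover have "L \<le> ereal (1/2)" unfolding L_def by (rule Liminf_le) (use dim_ratio_bounds in auto)
  ultimately obtain d where d: "L = ereal d" "0 \<le> d" "d \<le> 1/2"
    by (cases L) auto
  have "hausdorff_dim E = d"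
  proof (rule hausdorff_dim_eqI[OF d(2)])
    fix t assume t: "0 < t" "t < d"
    have "ereal ((t + d) / 2) < L" using t d by simp
    then have "\<forall>\<^sub>F k in sequentially. (t + d) / 2 < dim_ratio k"
      unfolding L_def by (auto dest: less_LiminfD)
    moreover have "t < (t + d) / 2" using t by simp
    ultimately obtain G where G: "\<And>k. holder_ratio t k \<le> G"
      using holder_ratio_bounded[OF t(1)] by blast
    show "hausdorff_measure t E \<noteq> 0"
      by (rule hausdorff_measure_E_pos[OF t(1) _ G]) (use t d in simp)
  next
    fix t assume t: "d < t"
    define t1 where "t1 = min t ((d + 1) / 2)"
    have "(d + 1) / 2 < 1" using d by simp
    then have t1: "d < t1" "t1 < 1" "t1 \<le> t" using t d by (auto simp: t1_def min_less_iff_disj)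
    have "\<exists>\<^sub>F n in sequentially. dim_ratio n < (d + t1) / 2"
    proof (rule ccontr)
      assume "\<not> ?thesis"
      then have "\<forall>\<^sub>F n in sequentially. ereal ((d + t1) / 2) \<le> ereal (dim_ratio n)"
        by (simp add: not_frequently not_less)
      then have "ereal ((d + t1) / 2) \<le> L" unfolding L_def by (rule Liminf_bounded)
      then show False using d t1 by simp
    qed
    then have "hausdorff_measure t1 E = 0"
      using d t1 by (intro hausdorff_measure_E_zero[of "(d + t1) / 2"]) auto
    moreover have "hausdorff_measure t E \<le> hausdorff_measure t1 E"
      using d t1 by (intro hausdorff_measure_antimono_exponent) auto
    ultimately show "hausdorff_measure t E = 0" by simp
  qed
  then show ?thesis by (simp add: L_def[symmetric] d)
qed

end

theorem lemma3p1:
  fixes s :: "nat \<Rightarrow> int" and N :: int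
  assumes s_ge: "\<And>n. n \<ge> 1 \<Longrightarrow> s n \<ge> 4"
    and s_lim: "filterlim s at_top sequentially"
    and N_ge: "N \<ge> 2"
  shows "hausdorff_dim {x :: real. 0 < x \<and> x \<le> 1 \<and>
            (\<forall>n\<ge>1. s n \<le> luroth_digit n x \<and> luroth_digit n x \<le> N * s n - 1)}
         = real_of_ereal (liminf (\<lambda>n. ereal (ln (\<Prod>i=1..n. real_of_int (s i)) /
              (2 * ln (\<Prod>i=1..n. real_of_int (s i)) + ln (real_of_int (s (n + 1)))))))"
proof -
  interpret restricted_luroth_unbounded s N
    using assms by unfold_locales auto
  have "(\<Prod>i=1..n. real_of_int (s i)) = sprod n" for n
    by (simp add: sprod_def prod.atLeast1_atMost_eq)
  then have ratio: "ln (\<Prod>i=1..n. real_of_int (s i)) /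
      (2 * ln (\<Prod>i=1..n. real_of_int (s i)) + ln (real_of_int (s (n + 1)))) = dim_ratio n" for n
    by (simp add: dim_ratio_def)
  show ?thesis
    unfolding E_def[symmetric] ratio by (rule hausdorff_dim_E)
qed

end
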